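(* Let $n,N\ge1$, $T>0$, $\mathbf c\in\mathbb R^n_+$, $\mathbf d\in\mathbb R^n_+$, $C\ge0$ with $d_{i+1}-d_i\le c_{i+1}$ for $i\in[n-1]$. Suppose the support set is the box $\mathcal U=\{\mathbf u\in\mathbb R^n:\mathbf u^{L}\le\mathbf u\le\mathbf u^{U}\}$ with $0\le u^L_i<u^U_i<\infty$ for all $i$, and let $\widehat{\mathbf u}^1,\dots,\widehat{\mathbf u}^N\in\mathcal U$, $\epsilon>0$. (i) If $p=1$, W-DRAS has the same optimal value and the same set of optimal schedules $\mathbf s$ as the linear program $$\min_{\rho,\mathbf s,\boldsymbol\gamma,\mathbf z}\ \epsilon\rho+\frac1N\sum_{j=1}^N\sum_{i=1}^n\gamma_{ij}$$ subject to, for all $i\in[n]$, $\ell\in[i,n+1]_{\mathbb Z}$, $j\in[N]$: $\sum_{k=i}^{\min\{\ell,n\}}\gamma_{kj}\ge\sum_{k=i}^{\min\{\ell,n\}}z_{k\ell j}$; $z_{i\ell j}+\pi_{i\ell}s_i+|u^L_i-\widehat u^j_i|\rho\ge\pi_{i\ell}u^L_i$; $z_{i\ell j}+\pi_{i\ell}s_i\ge\pi_{i\ell}\widehat u^j_i$; $z_{i\ell j}+\pi_{i\ell}s_i+|u^U_i-\widehat u^j_i|\rho\ge\pi_{i\ell}u^U_i$; and $\rho\ge0$, $\mathbf s\in\mathcal S$. (ii) If $p=2$, W-DRAS has the same optimal value and the same set of optimal schedules $\mathbf s$ as the second-order cone program $$\min_{\rho,\mathbf s,\boldsymbol\gamma,\mathbf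 z,\boldsymbol\beta,\mathbf r}\ \epsilon^2\rho+\frac1N\sum_{j=1}^N\sum_{i=1}^n\gamma_{ij}$$ subject to, for all $i\in[n]$, $\ell\in[i,n+1]_{\mathbb Z}$, $j\in[N]$: $\sum_{k=i}^{\min\{\ell,n\}}\gamma_{kj}\ge\sum_{k=i}^{\min\{\ell,n\}}z_{k\ell j}$; $z_{i\ell j}+\pi_{i\ell}s_i-(u^U_i-\widehat u^j_i)\beta^U_{i\ell j}-(\widehat u^j_i-u^L_i)\beta^L_{i\ell j}-r_{i\ell j}\ge\pi_{i\ell}\widehat u^j_i$; $\left\|\begin{bmatrix}\pi_{i\ell}+\beta^L_{i\ell j}-\beta^U_{i\ell j}\\ r_{i\ell j}-\rho\end{bmatrix}\right\|_2\le r_{i\ell j}+\rho$; $\beta^L_{i\ell j}\ge0$, $\beta^U_{i\ell j}\ge0$; and $\rho\ge0$, $\mathbf s\in\mathcal S$.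
   Context: Notation: $[m]=\{1,\dots,m\}$, $[i,j]_{\mathbb Z}=\{i,\dots,j\}$. Schedules: $\mathcal S=\{\mathbf s\in\mathbb R^n:\mathbf s\ge0,\sum_is_i\le T\}$. For $\mathbf s\in\mathcal S,\mathbf u\in\mathbb R^n$, $f(\mathbf s,\mathbf u)$ is the optimal value of $\min_{\mathbf w\in\mathbb R^{n+1},\mathbf v\in\mathbb R^n}\sum_{i=1}^n(c_iw_i+d_iv_i)+Cw_{n+1}$ s.t. $w_i-v_{i-1}=u_{i-1}+w_{i-1}-s_{i-1}$ ($i\in[2,n+1]_{\mathbb Z}$), $\mathbf w\ge0$, $w_1=0$, $\mathbf v\ge0$. For $p\ge1$, $d_p(\mathbb Q_1,\mathbb Q_2)=(\inf_\Pi\mathbb E_\Pi\|\mathbf u_1-\mathbf u_2\|_p^p)^{1/p}$ over couplings $\Pi$ of $\mathbb Q_1,\mathbb Q_2$; $\widehat{\mathbb P}^N=\frac1N\sum_j\delta_{\widehat{\mathbf u}^j}$; $\mathcal D_p(\widehat{\mathbb P}^N,\epsilon)$ is the set of probability distributions $\mathbb Q$ on $\mathcal U$ with $d_p(\mathbb Q,\widehat{\mathbb P}^N)\le\epsilon$; W-DRAS is $\min_{\mathbf s\in\mathcal S}\sup_{\mathbb Q\in\mathcal D_p(\widehat{\mathbb P}^N,\epsilon)}\mathbb E_{\mathbb Q}[f(\mathbf s,\mathbf u)]$. The constants $\pi_{i\ell}$ are: for $i\in[n]$, $\pi_{i\ell}=-d_\ell+\sum_{q=i+1}^{\ell}c_q$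 if $\ell\in[i,n]_{\mathbb Z}$, and $\pi_{i,n+1}=C+\sum_{q=i+1}^nc_q$. *)

theory Defs
  imports "HOL-Probability.Probability"
begin

text \<open>Vectors in R^n are modelled as functions nat => real, indexed by 1..n and
  required to vanish outside 1..n. Empirical samples: uhat j for j in 1..N.\<close>

type_synonym vec = "nat \<Rightarrow> real"

definition box_set :: "nat \<Rightarrow> vec \<Rightarrow> vec \<Rightarrow> vec set" where
  "box_set n uL uU = {u. (\<forall>i\<in>{1..n}. uL i \<le> u i \<and> u i \<le> uU i) \<and> (\<forall>i. i \<notin> {1..n} \<longrightarrow> u i = 0)}"

definition schedules :: "nat \<Rightarrow> real \<Rightarrow> vec set" where
  "schedules n T = {s. (\<forall>i\<in>{1..n}. 0 \<le> s i) \<and> (\<Sum>i=1..n. s i) \<le> T \<and> (\<forall>i. i \<notin> {1..n} \<longrightarrow> s i = 0)}"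

definition fval :: "nat \<Rightarrow> vec \<Rightarrow> vec \<Rightarrow> real \<Rightarrow> vec \<Rightarrow> vec \<Rightarrow> real" where
  "fval n c d C s u = Inf {(\<Sum>i=1..n. c i * w i + d i * v i) + C * w (n+1) | w v.
      (\<forall>i\<in>{2..n+1}. w i - v (i-1) = u (i-1) + w (i-1) - s (i-1)) \<and>
      (\<forall>i\<in>{1..n+1}. 0 \<le> w i) \<and> w 1 = 0 \<and> (\<forall>i\<in>{1..n}. 0 \<le> v i)}"

definition couplings :: "vec measure \<Rightarrow> vec measure \<Rightarrow> (vec \<times> vec) measure set" where
  "couplings Q1 Q2 = {P. sets P = sets (borel \<Otimes>\<^sub>M borel) \<and> prob_space P \<and>
      distr P borel fst = Q1 \<and> distr P borel snd = Q2}"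

definition wass_pow :: "nat \<Rightarrow> nat \<Rightarrow> vec measure \<Rightarrow> vec measure \<Rightarrow> ennreal" where
  "wass_pow p n Q1 Q2 = (INF P\<in>couplings Q1 Q2.
      \<integral>\<^sup>+ x. ennreal (\<Sum>i=1..n. \<bar>fst x i - snd x i\<bar> ^ p) \<partial>P)"

definition empirical :: "nat \<Rightarrow> (nat \<Rightarrow> vec) \<Rightarrow> vec measure" where
  "empirical N uhat = distr (uniform_measure (count_space UNIV) {1..N}) borel uhat"

text \<open>Wasserstein ball D_p(P^N, eps) of distributions on U: d_p(Q,P^N) <= eps,
  equivalently d_p(Q,P^N)^p <= eps^p.\<close>
definition wball :: "nat \<Rightarrow> nat \<Rightarrow> vec \<Rightarrow> vec \<Rightarrow> nat \<Rightarrow> (nat \<Rightarrow> vec) \<Rightarrow> real \<Rightarrow> vec measure set" where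
  "wball p n uL uU N uhat \<epsilon> = {Q. sets Q = sets borel \<and> prob_space Q \<and>
      (AE u in Q. u \<in> box_set n uL uU) \<and>
      wass_pow p n Q (empirical N uhat) \<le> ennreal (\<epsilon> ^ p)}"

definition worst_exp :: "nat \<Rightarrow> vec \<Rightarrow> vec \<Rightarrow> real \<Rightarrow> nat \<Rightarrow> vec \<Rightarrow> vec \<Rightarrow> nat \<Rightarrow> (nat \<Rightarrow> vec) \<Rightarrow> real \<Rightarrow> vec \<Rightarrow> ereal" where
  "worst_exp n c d C p uL uU N uhat \<epsilon> s =
     (SUP Q\<in>wball p n uL uU N uhat \<epsilon>. enn2ereal (\<integral>\<^sup>+ u. ennreal (fval n c d C s u) \<partial>Q))"

definition dras_val :: "nat \<Rightarrow> vec \<Rightarrow> vec \<Rightarrow> real \<Rightarrow> real \<Rightarrow> nat \<Rightarrow> vec \<Rightarrow> vec \<Rightarrow> nat \<Rightarrow> (nat \<Rightarrow> vec) \<Rightarrow> real \<Rightarrow> ereal" where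
  "dras_val n c d C T p uL uU N uhat \<epsilon> =
     (INF s\<in>schedules n T. worst_exp n c d C p uL uU N uhat \<epsilon> s)"

definition dras_opt :: "nat \<Rightarrow> vec \<Rightarrow> vec \<Rightarrow> real \<Rightarrow> real \<Rightarrow> nat \<Rightarrow> vec \<Rightarrow> vec \<Rightarrow> nat \<Rightarrow> (nat \<Rightarrow> vec) \<Rightarrow> real \<Rightarrow> vec set" where
  "dras_opt n c d C T p uL uU N uhat \<epsilon> =
     {s\<in>schedules n T. worst_exp n c d C p uL uU N uhat \<epsilon> s = dras_val n c d C T p uL uU N uhat \<epsilon>}"

definition pic :: "nat \<Rightarrow> vec \<Rightarrow> vec \<Rightarrow> real \<Rightarrow> nat \<Rightarrow> nat \<Rightarrow> real" where
  "pic n c d C i l = (if l = n + 1 then C + (\<Sum>q=i+1..n. c q) else - d l + (\<Sum>q=i+1..l. c q))"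

definition lp1_feas :: "nat \<Rightarrow> vec \<Rightarrow> vec \<Rightarrow> real \<Rightarrow> real \<Rightarrow> vec \<Rightarrow> vec \<Rightarrow> nat \<Rightarrow> (nat \<Rightarrow> vec)
    \<Rightarrow> real \<Rightarrow> vec \<Rightarrow> (nat \<Rightarrow> nat \<Rightarrow> real) \<Rightarrow> (nat \<Rightarrow> nat \<Rightarrow> nat \<Rightarrow> real) \<Rightarrow> bool" where
  "lp1_feas n c d C T uL uU N uhat \<rho> s \<gamma> z \<longleftrightarrow>
     (\<forall>i\<in>{1..n}. \<forall>l\<in>{i..n+1}. \<forall>j\<in>{1..N}.
        (\<Sum>k=i..min l n. \<gamma> k j) \<ge> (\<Sum>k=i..min l n. z k l j) \<and>
        z i l j + pic n c d C i l * s i + \<bar>uL i - uhat j i\<bar> * \<rho> \<ge> pic n c d C i l * uL i \<and>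
        z i l j + pic n c d C i l * s i \<ge> pic n c d C i l * uhat j i \<and>
        z i l j + pic n c d C i l * s i + \<bar>uU i - uhat j i\<bar> * \<rho> \<ge> pic n c d C i l * uU i) \<and>
     0 \<le> \<rho> \<and> s \<in> schedules n T"

definition lp1_obj :: "nat \<Rightarrow> nat \<Rightarrow> real \<Rightarrow> real \<Rightarrow> (nat \<Rightarrow> nat \<Rightarrow> real) \<Rightarrow> real" where
  "lp1_obj n N \<epsilon> \<rho> \<gamma> = \<epsilon> * \<rho> + (1 / real N) * (\<Sum>j=1..N. \<Sum>i=1..n. \<gamma> i j)"

definition lp1_val :: "nat \<Rightarrow> vec \<Rightarrow> vec \<Rightarrow> real \<Rightarrow> real \<Rightarrow> vec \<Rightarrow> vec \<Rightarrow> nat \<Rightarrow> (nat \<Rightarrow> vec) \<Rightarrow> real \<Rightarrow> ereal" where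
  "lp1_val n c d C T uL uU N uhat \<epsilon> =
     (INF x\<in>{(\<rho>, s, \<gamma>, z). lp1_feas n c d C T uL uU N uhat \<rho> s \<gamma> z}.
        ereal (lp1_obj n N \<epsilon> (fst x) (fst (snd (snd x)))))"

definition lp1_opt :: "nat \<Rightarrow> vec \<Rightarrow> vec \<Rightarrow> real \<Rightarrow> real \<Rightarrow> vec \<Rightarrow> vec \<Rightarrow> nat \<Rightarrow> (nat \<Rightarrow> vec) \<Rightarrow> real \<Rightarrow> vec set" where
  "lp1_opt n c d C T uL uU N uhat \<epsilon> = {s. \<exists>\<rho> \<gamma> z. lp1_feas n c d C T uL uU N uhat \<rho> s \<gamma> z \<and>
      ereal (lp1_obj n N \<epsilon> \<rho> \<gamma>) = lp1_val n c d C T uL uU N uhat \<epsilon>}"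

definition socp_feas :: "nat \<Rightarrow> vec \<Rightarrow> vec \<Rightarrow> real \<Rightarrow> real \<Rightarrow> vec \<Rightarrow> vec \<Rightarrow> nat \<Rightarrow> (nat \<Rightarrow> vec)
    \<Rightarrow> real \<Rightarrow> vec \<Rightarrow> (nat \<Rightarrow> nat \<Rightarrow> real) \<Rightarrow> (nat \<Rightarrow> nat \<Rightarrow> nat \<Rightarrow> real)
    \<Rightarrow> (nat \<Rightarrow> nat \<Rightarrow> nat \<Rightarrow> real) \<Rightarrow> (nat \<Rightarrow> nat \<Rightarrow> nat \<Rightarrow> real) \<Rightarrow> (nat \<Rightarrow> nat \<Rightarrow> nat \<Rightarrow> real) \<Rightarrow> bool" where
  "socp_feas n c d C T uL uU N uhat \<rho> s \<gamma> z \<beta>L \<beta>U r \<longleftrightarrow>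
     (\<forall>i\<in>{1..n}. \<forall>l\<in>{i..n+1}. \<forall>j\<in>{1..N}.
        (\<Sum>k=i..min l n. \<gamma> k j) \<ge> (\<Sum>k=i..min l n. z k l j) \<and>
        z i l j + pic n c d C i l * s i - (uU i - uhat j i) * \<beta>U i l j
          - (uhat j i - uL i) * \<beta>L i l j - r i l j \<ge> pic n c d C i l * uhat j i \<and>
        sqrt ((pic n c d C i l + \<beta>L i l j - \<beta>U i l j)\<^sup>2 + (r i l j - \<rho>)\<^sup>2) \<le> r i l j + \<rho> \<and>
        0 \<le> \<beta>L i l j \<and> 0 \<le> \<beta>U i l j) \<and>
     0 \<le> \<rho> \<and> s \<in> schedules n T"

definition socp_obj :: "nat \<Rightarrow> nat \<Rightarrow> real \<Rightarrow> real \<Rightarrow> (nat \<Rightarrow> nat \<Rightarrow> real) \<Rightarrow> real" where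
  "socp_obj n N \<epsilon> \<rho> \<gamma> = \<epsilon>\<^sup>2 * \<rho> + (1 / real N) * (\<Sum>j=1..N. \<Sum>i=1..n. \<gamma> i j)"

definition socp_val :: "nat \<Rightarrow> vec \<Rightarrow> vec \<Rightarrow> real \<Rightarrow> real \<Rightarrow> vec \<Rightarrow> vec \<Rightarrow> nat \<Rightarrow> (nat \<Rightarrow> vec) \<Rightarrow> real \<Rightarrow> ereal" where
  "socp_val n c d C T uL uU N uhat \<epsilon> =
     (INF x\<in>{(\<rho>, s, \<gamma>, z, \<beta>L, \<beta>U, r). socp_feas n c d C T uL uU N uhat \<rho> s \<gamma> z \<beta>L \<beta>U r}.
        ereal (socp_obj n N \<epsilon> (fst x) (fst (snd (snd x)))))"

definition socp_opt :: "nat \<Rightarrow> vec \<Rightarrow> vec \<Rightarrow> real \<Rightarrow> real \<Rightarrow> vec \<Rightarrow> vec \<Rightarrow> nat \<Rightarrow> (nat \<Rightarrow> vec) \<Rightarrow> real \<Rightarrow> vec set" where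
  "socp_opt n c d C T uL uU N uhat \<epsilon> = {s. \<exists>\<rho> \<gamma> z \<beta>L \<beta>U r.
      socp_feas n c d C T uL uU N uhat \<rho> s \<gamma> z \<beta>L \<beta>U r \<and>
      ereal (socp_obj n N \<epsilon> \<rho> \<gamma>) = socp_val n c d C T uL uU N uhat \<epsilon>}"

end

theory Submission
  imports Defs
begin

text \<open>The second-stage cost has a closed form: \<open>f(s, u)\<close> is the maximum, over partitions of
  \<open>{1..n}\<close> into consecutive blocks, of \<open>\<Sum> \<pi>\<^sub>i\<^sub>l (u\<^sub>i - s\<^sub>i)\<close>. The greedy waiting-time recursion
  attains it, and the condition \<open>d\<^sub>i\<^sub>+\<^sub>1 - d\<^sub>i \<le> c\<^sub>i\<^sub>+\<^sub>1\<close> makes every feasible recourse at least as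
  costly. Since each block only involves its own coordinates, a worst case chosen separately for
  every pair \<open>(i, l)\<close> can be merged into one scenario, so the supremum of
  \<open>f(s, u) - \<rho> \<parallel>u - uhat\<^sub>j\<parallel>\<^sub>p\<^sup>p\<close> over the box is the optimal value of the inner constraints of the
  LP (\<open>p = 1\<close>: a concave piecewise linear function peaks at \<open>uL\<close>, \<open>uhat\<close> or \<open>uU\<close>) or of the SOCP
  (\<open>p = 2\<close>: the quadratic penalty is a rotated cone), with \<open>\<gamma>\<close> the increments of the block maximum.

  It remains to prove strong duality
  \<open>sup\<^sub>Q E\<^sub>Q f = min\<^sub>\<rho>\<^sub>\<ge>\<^sub>0 \<epsilon>\<^sup>p \<rho> + 1/N \<Sum>\<^sub>j sup\<^sub>u (f(s, u) - \<rho> \<parallel>u - uhat\<^sub>j\<parallel>\<^sub>p\<^sup>p)\<close> for the Wasserstein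
  ball. Integrating the pointwise inequality along a near-optimal coupling gives \<open>\<le>\<close>. For \<open>\<ge>\<close>,
  the maximisers at \<open>\<rho>\<^sup>* + \<delta>\<close> and \<open>\<rho>\<^sup>* - \<delta>\<close> of the dual objective have mean transport cost below
  and above the budget \<open>\<epsilon>\<^sup>p\<close> respectively, and a mixture of the two that exhausts the budget is a
  distribution in the ball whose expected cost is within \<open>\<delta> K\<close> of the dual value.\<close>

section \<open>Maxima over block partitions\<close>

lemma backward_induct [consumes 1, case_names step]:
  fixes m N :: nat
  assumes "m \<le> N"
    and step: "\<And>m. m \<le> N \<Longrightarrow> (\<And>m'. m < m' \<Longrightarrow> m' \<le> N \<Longrightarrow> P m') \<Longrightarrow> P m"
  shows "P m"
  using assms(1)
proof (induction "N - m" arbitrary: m rule: less_induct)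
  case (less m)
  show ?case
  proof (rule step[OF less.prems])
    fix m' assume "m < m'" "m' \<le> N"
    then show "P m'" using less.hyps[of m'] by auto
  qed
qed

lemma sum_split_at:
  fixes f :: "nat \<Rightarrow> 'a::comm_monoid_add"
  assumes "m \<le> Suc k" "k \<le> n"
  shows "sum f {m..n} = sum f {m..k} + sum f {Suc k..n}"
proof -
  have "{m..n} = {m..k} \<union> {Suc k..n}" using assms by auto
  then show ?thesis by (simp add: sum.union_disjoint)
qed

lemma sum_suffix_weights_exchange:
  fixes c x :: "nat \<Rightarrow> 'a::comm_semiring_1"
  shows "(\<Sum>q=m..L. (\<Sum>r=Suc q..L. c r) * x q) = (\<Sum>r=m..L. c r * (\<Sum>q=m..<r. x q))"
proof (induction L)
  case (Suc L)
  show ?case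
  proof (cases "m \<le> Suc L")
    case True
    have "(\<Sum>q=m..Suc L. (\<Sum>r=Suc q..Suc L. c r) * x q)
        = (\<Sum>q=m..L. (\<Sum>r=Suc q..Suc L. c r) * x q)"
      using True by simp
    also have "\<dots> = (\<Sum>q=m..L. (\<Sum>r=Suc q..L. c r) * x q + c (Suc L) * x q)"
      by (intro sum.cong) (auto simp: distrib_right)
    also have "\<dots> = (\<Sum>r=m..Suc L. c r * (\<Sum>q=m..<r. x q))"
      using True by (simp add: Suc.IH sum.distrib sum_distrib_left atLeastLessThanSuc_atLeastAtMost)
    finally show ?thesis .
  qed simp
qed simp

text \<open>\<open>block_max a n i\<close> is the maximum, over all partitions of \<open>{i..n}\<close> into consecutive
  blocks \<open>{m..min l n}\<close> labelled by some \<open>l \<ge> m\<close> (where \<open>l = n + 1\<close> marks a block running to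
  the end), of the total weight \<open>\<Sum>q a q l\<close> of the blocks.\<close>

function block_max :: "(nat \<Rightarrow> nat \<Rightarrow> real) \<Rightarrow> nat \<Rightarrow> nat \<Rightarrow> real" where
  "block_max a n i = (if n < i then 0 else
     Max ((\<lambda>l. (\<Sum>q=i..min l n. a q l) + block_max a n (Suc (min l n))) ` {i..n+1}))"
  by pat_completeness auto
termination by (relation "Wellfounded.measure (\<lambda>(a, n, i). Suc n - i)") auto

declare block_max.simps [simp del]

lemma block_max_beyond [simp]: "n < i \<Longrightarrow> block_max a n i = 0"
  by (simp add: block_max.simps)

lemma block_max_eq:
  "i \<le> n \<Longrightarrow> block_max a n i =
     Max ((\<lambda>l. (\<Sum>q=i..min l n. a q l) + block_max a n (Suc (min l n))) ` {i..n+1})"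
  by (simp add: block_max.simps)

lemma block_max_ge:
  assumes "i \<le> n" "l \<in> {i..n+1}"
  shows "(\<Sum>q=i..min l n. a q l) + block_max a n (Suc (min l n)) \<le> block_max a n i"
  unfolding block_max_eq[OF assms(1)] using assms(2) by (intro Max_ge) auto

lemma block_max_attained:
  assumes "i \<le> n"
  obtains l where "l \<in> {i..n+1}"
    and "block_max a n i = (\<Sum>q=i..min l n. a q l) + block_max a n (Suc (min l n))"
proof -
  have "block_max a n i \<in> (\<lambda>l. (\<Sum>q=i..min l n. a q l) + block_max a n (Suc (min l n))) ` {i..n+1}"
    unfolding block_max_eq[OF assms] using assms by (intro Max_in) auto
  then show ?thesis using that by blast
qed

lemma block_max_cong:
  assumes "\<And>q l. q \<in> {i..n} \<Longrightarrow> l \<in> {q..n+1} \<Longrightarrow> a q l = b q l"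
  shows "block_max a n i = block_max b n i"
  using assms
proof (induction a n i rule: block_max.induct)
  case (1 a n i)
  show ?case
  proof (cases "i \<le> n")
    case True
    have "(\<Sum>q=i..min l n. a q l) + block_max a n (Suc (min l n))
        = (\<Sum>q=i..min l n. b q l) + block_max b n (Suc (min l n))" if l: "l \<in> {i..n+1}" for l
    proof -
      have "block_max a n (Suc (min l n)) = block_max b n (Suc (min l n))"
        using True l "1.prems" by (intro "1.IH") auto
      moreover have "(\<Sum>q=i..min l n. a q l) = (\<Sum>q=i..min l n. b q l)"
        using l "1.prems" by (intro sum.cong) auto
      ultimately show ?thesis by simp
    qed
    then show ?thesis
      unfolding block_max_eq[OF True] by (intro arg_cong[where f = Max] image_cong) auto
  qed simp
qed

lemma block_max_minus_index_term:
  "block_max (\<lambda>q l. a q l - e q) n i = block_max a n i - (\<Sum>q=i..n. e q)"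
proof (induction a n i rule: block_max.induct)
  case (1 a n i)
  show ?case
  proof (cases "i \<le> n")
    case True
    define blocks where "blocks = (\<lambda>l. (\<Sum>q=i..min l n. a q l) + block_max a n (Suc (min l n)))"
    have "(\<Sum>q=i..min l n. a q l - e q) + block_max (\<lambda>q l. a q l - e q) n (Suc (min l n))
        = blocks l - (\<Sum>q=i..n. e q)" if l: "l \<in> {i..n+1}" for l
    proof -
      have "(\<Sum>q=i..n. e q) = (\<Sum>q=i..min l n. e q) + (\<Sum>q=Suc (min l n)..n. e q)"
        using l by (intro sum_split_at) auto
      moreover have "block_max (\<lambda>q l. a q l - e q) n (Suc (min l n))
          = block_max a n (Suc (min l n)) - (\<Sum>q=Suc (min l n)..n. e q)"
        using "1.IH" True l by simp
      ultimately show ?thesis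
        unfolding blocks_def sum_subtractf by simp
    qed
    then have "block_max (\<lambda>q l. a q l - e q) n i = Max ((\<lambda>v. v - (\<Sum>q=i..n. e q)) ` blocks ` {i..n+1})"
      unfolding block_max_eq[OF True] image_image by (intro arg_cong[where f = Max] image_cong) auto
    also have "\<dots> = Max (blocks ` {i..n+1}) - (\<Sum>q=i..n. e q)"
      using True by (intro mono_Max_commute[symmetric]) (auto simp: mono_def)
    finally show ?thesis
      unfolding blocks_def block_max_eq[OF True] .
  qed simp
qed

lemma block_max_le_sum:
  assumes "\<And>m l. m \<in> {i..n} \<Longrightarrow> l \<in> {m..n+1} \<Longrightarrow> (\<Sum>q=m..min l n. a q l) \<le> (\<Sum>q=m..min l n. g q)"
  shows "block_max a n i \<le> (\<Sum>q=i..n. g q)"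
  using assms
proof (induction a n i rule: block_max.induct)
  case (1 a n i)
  show ?case
  proof (cases "i \<le> n")
    case True
    obtain l where l: "l \<in> {i..n+1}"
      and eq: "block_max a n i = (\<Sum>q=i..min l n. a q l) + block_max a n (Suc (min l n))"
      using block_max_attained[OF True] .
    have "(\<Sum>q=i..min l n. a q l) \<le> (\<Sum>q=i..min l n. g q)"
      using True l by (intro "1.prems") auto
    moreover have "block_max a n (Suc (min l n)) \<le> (\<Sum>q=Suc (min l n)..n. g q)"
      using True l "1.prems" by (intro "1.IH") auto
    moreover have "(\<Sum>q=i..n. g q) = (\<Sum>q=i..min l n. g q) + (\<Sum>q=Suc (min l n)..n. g q)"
      using l by (intro sum_split_at) auto
    ultimately show ?thesis
      unfolding eq by linarith
  qed simp
qed

lemma sum_block_max_diff: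
  "i \<le> Suc n \<Longrightarrow> (\<Sum>k=i..n. block_max a n k - block_max a n (Suc k)) = block_max a n i"
  using sum_Suc_diff[of i n "\<lambda>k. - block_max a n k"] by simp

lemma block_sum_le_block_max_diff:
  assumes "i \<le> n" "l \<in> {i..n+1}"
  shows "(\<Sum>k=i..min l n. a k l) \<le> (\<Sum>k=i..min l n. block_max a n k - block_max a n (Suc k))"
proof -
  have "(\<Sum>k=i..min l n. block_max a n k - block_max a n (Suc k))
      = block_max a n i - block_max a n (Suc (min l n))"
    using sum_Suc_diff[of i "min l n" "\<lambda>k. - block_max a n k"] assms by (simp add: le_SucI)
  then show ?thesis
    using block_max_ge[OF assms, of a] by simp
qed

section \<open>The recourse value as a block maximum\<close>

definition tail_cost :: "nat \<Rightarrow> vec \<Rightarrow> vec \<Rightarrow> real \<Rightarrow> vec \<Rightarrow> vec \<Rightarrow> nat \<Rightarrow> real" where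
  "tail_cost n c d C w v i = (\<Sum>k=i..n. c k * w k + d k * v k) + C * w (Suc n)"

definition recourse_feasible :: "nat \<Rightarrow> vec \<Rightarrow> vec \<Rightarrow> vec \<Rightarrow> vec \<Rightarrow> bool" where
  "recourse_feasible n s u w v \<longleftrightarrow>
     (\<forall>i\<in>{2..n+1}. w i - v (i-1) = u (i-1) + w (i-1) - s (i-1)) \<and>
     (\<forall>i\<in>{1..n+1}. 0 \<le> w i) \<and> w 1 = 0 \<and> (\<forall>i\<in>{1..n}. 0 \<le> v i)"

lemma fval_eq_Inf_tail_cost:
  "fval n c d C s u = Inf {tail_cost n c d C w v 1 | w v. recourse_feasible n s u w v}"
  unfolding fval_def tail_cost_def recourse_feasible_def by simp

lemma recourse_feasible_increment:
  assumes "recourse_feasible n s u w v" "q \<in> {1..n}"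
  shows "u q - s q = w (Suc q) - w q - v q"
proof -
  have "Suc q \<in> {2..n+1}" using assms(2) by auto
  then show ?thesis using assms(1) unfolding recourse_feasible_def by fastforce
qed

lemma tail_cost_nonneg:
  assumes "\<forall>i\<in>{1..n}. 0 \<le> c i" "\<forall>i\<in>{1..n}. 0 \<le> d i" "0 \<le> C" "recourse_feasible n s u w v"
  shows "0 \<le> tail_cost n c d C w v 1"
  using assms unfolding tail_cost_def recourse_feasible_def
  by (auto intro!: add_nonneg_nonneg sum_nonneg mult_nonneg_nonneg)

text \<open>Waiting times when every job starts as early as possible, \<open>x q\<close> being the overrun
  \<open>u q - s q\<close> of job \<open>q\<close>.\<close>

primrec waiting_time :: "vec \<Rightarrow> nat \<Rightarrow> real" where
  "waiting_time x 0 = 0"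
| "waiting_time x (Suc i) = (if i = 0 then 0 else max 0 (waiting_time x i + x i))"

lemma waiting_time_nonneg: "0 \<le> waiting_time x i"
  by (cases i) auto

definition idle_time :: "vec \<Rightarrow> nat \<Rightarrow> real" where
  "idle_time x i = waiting_time x (Suc i) - waiting_time x i - x i"

lemma waiting_time_feasible:
  "recourse_feasible n s u (waiting_time (\<lambda>q. u q - s q)) (idle_time (\<lambda>q. u q - s q))"
  unfolding recourse_feasible_def idle_time_def by (auto simp: waiting_time_nonneg)

lemma fval_le_tail_cost:
  assumes "\<forall>i\<in>{1..n}. 0 \<le> c i" "\<forall>i\<in>{1..n}. 0 \<le> d i" "0 \<le> C" "recourse_feasible n s u w v"
  shows "fval n c d C s u \<le> tail_cost n c d C w v 1"
proof -
  have "bdd_below {tail_cost n c d C w v 1 | w v. recourse_feasible n s u w v}"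
    using tail_cost_nonneg[OF assms(1-3)] by (auto simp: bdd_below_def simp del: One_nat_def intro!: exI[of _ 0])
  then show ?thesis
    unfolding fval_eq_Inf_tail_cost using assms(4) by (auto intro: cInf_lower)
qed

lemma le_fval:
  assumes "\<And>w v. recourse_feasible n s u w v \<Longrightarrow> y \<le> tail_cost n c d C w v 1"
  shows "y \<le> fval n c d C s u"
  unfolding fval_eq_Inf_tail_cost using waiting_time_feasible[of n s u] assms
  by (intro cInf_greatest) blast+

lemma fval_nonneg:
  assumes "\<forall>i\<in>{1..n}. 0 \<le> c i" "\<forall>i\<in>{1..n}. 0 \<le> d i" "0 \<le> C"
  shows "0 \<le> fval n c d C s u"
  using tail_cost_nonneg[OF assms] by (intro le_fval)

lemma pic_inner: "l \<le> n \<Longrightarrow> pic n c d C q l = - d l + (\<Sum>r=Suc q..l. c r)"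
  unfolding pic_def by simp

lemma pic_last: "pic n c d C q (Suc n) = C + (\<Sum>r=Suc q..n. c r)"
  unfolding pic_def by simp

lemma block_cost_eq:
  fixes c x W :: "nat \<Rightarrow> real"
  assumes "\<forall>r\<in>{m..L}. W r = (\<Sum>q=m..<r. x q)"
  shows "K * (\<Sum>q=m..L. x q) + (\<Sum>r=m..L. c r * W r) = (\<Sum>q=m..L. (K + (\<Sum>r=Suc q..L. c r)) * x q)"
proof -
  have "(\<Sum>r=m..L. c r * W r) = (\<Sum>r=m..L. c r * (\<Sum>q=m..<r. x q))"
    using assms by (intro sum.cong) auto
  then show ?thesis
    by (simp add: sum_suffix_weights_exchange distrib_right sum.distrib sum_distrib_left)
qed

lemma final_block_cost_eq:
  fixes W V x :: vec
  assumes "m \<le> Suc n" "\<forall>r\<in>{m..Suc n}. W r = (\<Sum>q=m..<r. x q)"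
  shows "tail_cost n c d C W V (Suc n) + (\<Sum>r=m..<Suc n. c r * W r) = (\<Sum>q=m..n. pic n c d C q (Suc n) * x q)"
proof -
  have "tail_cost n c d C W V (Suc n) + (\<Sum>r=m..<Suc n. c r * W r)
      = C * (\<Sum>q=m..n. x q) + (\<Sum>r=m..n. c r * W r)"
    using assms by (simp add: tail_cost_def atLeastLessThanSuc_atLeastAtMost)
  also have "\<dots> = (\<Sum>q=m..n. pic n c d C q (Suc n) * x q)"
    using assms by (subst block_cost_eq) (auto simp: pic_last)
  finally show ?thesis .
qed

lemma closed_block_cost_eq:
  fixes W V x :: vec
  assumes "i \<le> n" "m \<le> i" "\<forall>r\<in>{m..i}. W r = (\<Sum>q=m..<r. x q)" "V i = - (W i + x i)"
  shows "tail_cost n c d C W V i + (\<Sum>r=m..<i. c r * W r)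
    = (\<Sum>q=m..i. pic n c d C q i * x q) + tail_cost n c d C W V (Suc i)"
proof -
  have "tail_cost n c d C W V i = c i * W i + d i * V i + tail_cost n c d C W V (Suc i)"
    unfolding tail_cost_def using assms(1) by (simp add: sum.atLeast_Suc_atMost)
  then have "tail_cost n c d C W V i + (\<Sum>r=m..<i. c r * W r)
      = - d i * (\<Sum>q=m..i. x q) + (\<Sum>r=m..i. c r * W r) + tail_cost n c d C W V (Suc i)"
    using assms(2-4) by (simp add: atLeastLessThanSuc_atLeastAtMost[symmetric] algebra_simps)
  also have "\<dots> = (\<Sum>q=m..i. pic n c d C q i * x q) + tail_cost n c d C W V (Suc i)"
    using assms by (subst block_cost_eq) (auto simp: pic_inner)
  finally show ?thesis .
qed

text \<open>While the waiting time stays positive the current block continues; when it would become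
  negative, the block closes at \<open>i\<close> and its cost is the block weight of label \<open>i\<close>.\<close>

lemma waiting_time_tail_cost_le_block_max:
  assumes "i \<le> n + 1" "1 \<le> m" "m \<le> i" "\<forall>r\<in>{m..i}. waiting_time x r = (\<Sum>q=m..<r. x q)"
  shows "tail_cost n c d C (waiting_time x) (idle_time x) i + (\<Sum>r=m..<i. c r * waiting_time x r)
    \<le> block_max (\<lambda>q l. pic n c d C q l * x q) n m"
  using assms
proof (induction i arbitrary: m rule: backward_induct)
  case (step i)
  let ?W = "waiting_time x" and ?a = "\<lambda>q l. pic n c d C q l * x q"
  show ?case
  proof (cases "i = n + 1")
    case True
    then show ?thesis
      using final_block_cost_eq[of m n ?W x] step.prems block_max_ge[of m n "n+1" ?a]
      by (cases "m \<le> n") auto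
  next
    case False
    then have i: "1 \<le> i" "i \<le> n" using step.prems step.hyps by auto
    show ?thesis
    proof (cases "0 \<le> ?W i + x i")
      case True
      then have WS: "?W (Suc i) = ?W i + x i" using i by simp
      have prefix: "\<forall>r\<in>{m..Suc i}. ?W r = (\<Sum>q=m..<r. x q)"
        using step.prems WS by (auto simp: le_Suc_eq)
      have "tail_cost n c d C ?W (idle_time x) i + (\<Sum>r=m..<i. c r * ?W r)
          = tail_cost n c d C ?W (idle_time x) (Suc i) + (\<Sum>r=m..<Suc i. c r * ?W r)"
        unfolding tail_cost_def using i WS step.prems by (simp add: sum.atLeast_Suc_atMost idle_time_def)
      also have "\<dots> \<le> block_max ?a n m"
        using step.IH[of "Suc i" m] prefix step.prems i by simp
      finally show ?thesis .
    next
      case False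
      then have "?W (Suc i) = 0" using i by simp
      then have "tail_cost n c d C ?W (idle_time x) i + (\<Sum>r=m..<i. c r * ?W r)
          = (\<Sum>q=m..i. ?a q i) + tail_cost n c d C ?W (idle_time x) (Suc i)"
        using step.prems i by (intro closed_block_cost_eq) (auto simp: idle_time_def)
      also have "\<dots> \<le> (\<Sum>q=m..min i n. ?a q i) + block_max ?a n (Suc (min i n))"
        using step.IH[of "Suc i" "Suc i"] i \<open>?W (Suc i) = 0\<close> by (simp add: min_absorb1)
      also have "\<dots> \<le> block_max ?a n m"
        using step.prems i by (intro block_max_ge) auto
      finally show ?thesis .
    qed
  qed
qed

lemma waiting_time_cost_le_block_max:
  "tail_cost n c d C (waiting_time x) (idle_time x) 1 \<le> block_max (\<lambda>q l. pic n c d C q l * x q) n 1"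
  using waiting_time_tail_cost_le_block_max[of 1 n 1 x] by simp

lemma d_increase_le_sum_c:
  fixes c d :: "nat \<Rightarrow> real"
  assumes "\<forall>i\<in>{1..n-1}. d (i+1) - d i \<le> c (i+1)" "1 \<le> q" "q \<le> L" "L \<le> n"
  shows "d L - d q \<le> (\<Sum>r=Suc q..L. c r)"
  using assms(3,4)
proof (induction L)
  case (Suc L)
  show ?case
  proof (cases "q = Suc L")
    case False
    then have "q \<le> L" using Suc.prems by simp
    moreover have "d (L+1) - d L \<le> c (L+1)" using assms(1,2) Suc.prems \<open>q \<le> L\<close> by auto
    ultimately show ?thesis using Suc by simp
  qed simp
qed simp

lemma block_sum_by_parts:
  fixes w v x c :: "nat \<Rightarrow> real"
  assumes hx: "\<forall>q\<in>{i..L}. x q = w (Suc q) - w q - v q" and iL: "i \<le> L"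
  shows "(\<Sum>q=i..L. (K + (\<Sum>r=Suc q..L. c r)) * x q) =
     K * (w (Suc L) - w i - (\<Sum>q=i..L. v q)) + (\<Sum>r=i..L. c r * w r) - w i * (\<Sum>r=i..L. c r)
     - (\<Sum>q=i..L. (\<Sum>r=Suc q..L. c r) * v q)"
proof -
  have prefix: "(\<Sum>q=i..<r. x q) = w r - w i - (\<Sum>q=i..<r. v q)" if "i \<le> r" "r \<le> Suc L" for r
  proof -
    have "(\<Sum>q=i..<r. x q) = (\<Sum>q=i..<r. (w (Suc q) - w q) - v q)"
      using hx that by (intro sum.cong) auto
    then show ?thesis
      using sum_Suc_diff'[of i r w] that by (simp add: sum_subtractf)
  qed
  have "(\<Sum>r=i..L. c r * (\<Sum>q=i..<r. x q))
      = (\<Sum>r=i..L. c r * w r - w i * c r - c r * (\<Sum>q=i..<r. v q))"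
    by (intro sum.cong refl) (simp add: prefix right_diff_distrib mult.commute)
  also have "\<dots> = (\<Sum>r=i..L. c r * w r) - w i * (\<Sum>r=i..L. c r) - (\<Sum>r=i..L. c r * (\<Sum>q=i..<r. v q))"
    by (simp add: sum_subtractf sum_distrib_left)
  finally have "(\<Sum>r=i..L. c r * (\<Sum>q=i..<r. x q))
      = (\<Sum>r=i..L. c r * w r) - w i * (\<Sum>r=i..L. c r) - (\<Sum>r=i..L. c r * (\<Sum>q=i..<r. v q))" .
  moreover have "(\<Sum>q=i..L. x q) = w (Suc L) - w i - (\<Sum>q=i..L. v q)"
    using prefix[of "Suc L"] iL by (simp add: atLeastLessThanSuc_atLeastAtMost)
  moreover have "(\<Sum>q=i..L. (K + (\<Sum>r=Suc q..L. c r)) * x q)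
      = K * (\<Sum>q=i..L. x q) + (\<Sum>r=i..L. c r * (\<Sum>q=i..<r. x q))"
    unfolding sum_suffix_weights_exchange[symmetric] by (simp add: distrib_right sum.distrib sum_distrib_left)
  ultimately show ?thesis
    by (simp add: sum_suffix_weights_exchange)
qed

lemma inner_block_le_cost:
  fixes w v x c d :: "nat \<Rightarrow> real"
  assumes hx: "\<forall>q\<in>{i..L}. x q = w (Suc q) - w q - v q"
    and i1: "1 \<le> i" and iL: "i \<le> L" and Ln: "L \<le> n"
    and w1: "i = 1 \<longrightarrow> w i = 0" and wi: "0 \<le> w i" and v0: "\<forall>q\<in>{i..L}. 0 \<le> v q"
    and tel: "\<forall>i\<in>{1..n-1}. d (i+1) - d i \<le> c (i+1)"
  shows "(\<Sum>q=i..L. (- d L + (\<Sum>r=Suc q..L. c r)) * x q) - d (i-1) * w i + d L * w (Suc L)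
     \<le> (\<Sum>k=i..L. c k * w k + d k * v k)"
proof -
  define A where "A = (\<Sum>q=i..L. v q)"
  define B where "B = (\<Sum>r=i..L. c r)"
  define Cw where "Cw = (\<Sum>r=i..L. c r * w r)"
  define Dv where "Dv = (\<Sum>r=i..L. d r * v r)"
  define E where "E = (\<Sum>q=i..L. (\<Sum>r=Suc q..L. c r) * v q)"
  have lhs: "(\<Sum>q=i..L. (- d L + (\<Sum>r=Suc q..L. c r)) * x q) = - d L * (w (Suc L) - w i - A) + Cw - w i * B - E"
    unfolding A_def Cw_def B_def E_def by (rule block_sum_by_parts[OF hx iL])
  have rhs: "(\<Sum>k=i..L. c k * w k + d k * v k) = Cw + Dv"
    unfolding Cw_def Dv_def by (simp add: sum.distrib)
  have "Dv - d L * A + E = (\<Sum>q=i..L. v q * (d q - d L + (\<Sum>r=Suc q..L. c r)))"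
    unfolding Dv_def A_def E_def by (simp add: sum_distrib_left sum_subtractf sum.distrib algebra_simps)
  also have "\<dots> \<ge> 0"
  proof (rule sum_nonneg)
    fix q assume q: "q \<in> {i..L}"
    have "d L - d q \<le> (\<Sum>r=Suc q..L. c r)" using d_increase_le_sum_c[OF tel, of q L] q i1 Ln by auto
    then show "0 \<le> v q * (d q - d L + (\<Sum>r=Suc q..L. c r))" using v0 q by simp
  qed
  finally have idle_part: "0 \<le> Dv - d L * A + E" .
  have wait_part: "0 \<le> w i * (d (i-1) - d L + B)"
  proof (cases "i = 1")
    case False
    have "d L - d (i-1) \<le> (\<Sum>r=Suc (i-1)..L. c r)"
      using d_increase_le_sum_c[OF tel, of "i-1" L] False i1 iL Ln by auto
    then show ?thesis using False i1 wi unfolding B_def by simp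
  qed (use w1 in simp)
  show ?thesis unfolding lhs rhs using idle_part wait_part by (simp add: algebra_simps)
qed

lemma final_block_le_cost:
  fixes w v x c d :: "nat \<Rightarrow> real"
  assumes hx: "\<forall>q\<in>{i..n}. x q = w (Suc q) - w q - v q"
    and i1: "1 \<le> i" and iL: "i \<le> n"
    and w1: "i = 1 \<longrightarrow> w i = 0" and wi: "0 \<le> w i" and v0: "\<forall>q\<in>{i..n}. 0 \<le> v q"
    and c0: "\<forall>i\<in>{1..n}. 0 \<le> c i" and d0: "\<forall>i\<in>{1..n}. 0 \<le> d i" and C0: "0 \<le> C"
  shows "(\<Sum>q=i..n. (C + (\<Sum>r=Suc q..n. c r)) * x q) - d (i-1) * w i \<le> tail_cost n c d C w v i"
proof -
  define A where "A = (\<Sum>q=i..n. v q)"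
  define B where "B = (\<Sum>r=i..n. c r)"
  define Cw where "Cw = (\<Sum>r=i..n. c r * w r)"
  define Dv where "Dv = (\<Sum>r=i..n. d r * v r)"
  define E where "E = (\<Sum>q=i..n. (\<Sum>r=Suc q..n. c r) * v q)"
  have lhs: "(\<Sum>q=i..n. (C + (\<Sum>r=Suc q..n. c r)) * x q) = C * (w (Suc n) - w i - A) + Cw - w i * B - E"
    unfolding A_def Cw_def B_def E_def by (rule block_sum_by_parts[OF hx iL])
  have rhs: "tail_cost n c d C w v i = Cw + Dv + C * w (Suc n)"
    unfolding tail_cost_def Cw_def Dv_def by (simp add: sum.distrib)
  have "0 \<le> A" unfolding A_def using v0 by (intro sum_nonneg) auto
  moreover have "0 \<le> B" unfolding B_def using c0 i1 by (intro sum_nonneg) auto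
  moreover have "0 \<le> Dv" unfolding Dv_def using v0 d0 i1 by (intro sum_nonneg) auto
  moreover have "0 \<le> E" unfolding E_def using v0 c0 i1
    by (intro sum_nonneg mult_nonneg_nonneg) (auto intro!: sum_nonneg)
  moreover have "0 \<le> d (i-1) * w i"
  proof (cases "i = 1")
    case False
    then have "i - 1 \<in> {1..n}" using i1 iL by auto
    then show ?thesis using d0 wi by simp
  qed (use w1 in simp)
  ultimately show ?thesis unfolding lhs rhs using C0 wi by (simp add: algebra_simps)
qed

lemma block_max_le_tail_cost:
  assumes c0: "\<forall>i\<in>{1..n}. 0 \<le> c i" and d0: "\<forall>i\<in>{1..n}. 0 \<le> d i" and C0: "0 \<le> C"
    and tel: "\<forall>i\<in>{1..n-1}. d (i+1) - d i \<le> c (i+1)"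
    and feas: "recourse_feasible n s u w v"
  shows "block_max (\<lambda>q l. pic n c d C q l * (u q - s q)) n 1 \<le> tail_cost n c d C w v 1"
proof -
  define a where "a = (\<lambda>q l. pic n c d C q l * (u q - s q))"
  define x where "x = (\<lambda>q. u q - s q)"
  have hx: "\<forall>q\<in>{1..n}. x q = w (Suc q) - w q - v q"
    using recourse_feasible_increment[OF feas] unfolding x_def by blast
  have w0: "\<forall>i\<in>{1..n+1}. 0 \<le> w i" and w1: "w 1 = 0" and v0: "\<forall>i\<in>{1..n}. 0 \<le> v i"
    using feas unfolding recourse_feasible_def by auto
  have "block_max a n i - d (i-1) * w i \<le> tail_cost n c d C w v i" if "i \<le> n+1" "1 \<le> i" for i
    using that
  proof (induction i rule: backward_induct)
    case (step i)
    have wi: "0 \<le> w i" and w1': "i = 1 \<longrightarrow> w i = 0" using w0 w1 step.prems step.hyps by auto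
    show ?case
    proof (cases "i \<le> n")
      case False
      then have "i = Suc n" using step.hyps by simp
      moreover have "0 \<le> d (i-1) * w i" using d0 wi w1' \<open>i = Suc n\<close> by (cases n) auto
      moreover have "0 \<le> C * w (Suc n)" using C0 w0 by simp
      ultimately show ?thesis by (simp add: tail_cost_def)
    next
      case True
      obtain l where l: "l \<in> {i..n+1}"
        and eq: "block_max a n i = (\<Sum>q=i..min l n. a q l) + block_max a n (Suc (min l n))"
        using block_max_attained[OF True] .
      show ?thesis
      proof (cases "l \<le> n")
        case True
        have "(\<Sum>q=i..min l n. a q l) - d (i-1) * w i + d l * w (Suc l) \<le> (\<Sum>k=i..l. c k * w k + d k * v k)"
          using inner_block_le_cost[of i l x w v, OF _ step.prems _ True w1' wi _ tel] hx l v0 True step.prems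
          by (auto simp: a_def x_def pic_inner min_absorb1)
        moreover have "block_max a n (Suc l) - d l * w (Suc l) \<le> tail_cost n c d C w v (Suc l)"
          using step.IH[of "Suc l"] l True by simp
        moreover have "tail_cost n c d C w v i = (\<Sum>k=i..l. c k * w k + d k * v k) + tail_cost n c d C w v (Suc l)"
          unfolding tail_cost_def using l True by (simp add: sum_split_at[of i l n])
        ultimately show ?thesis unfolding eq using True by (simp add: min_absorb1)
      next
        case False
        then have "l = n+1" using l by simp
        have "(\<Sum>q=i..n. a q (n+1)) - d (i-1) * w i \<le> tail_cost n c d C w v i"
          using final_block_le_cost[of i n x w v, OF _ step.prems \<open>i \<le> n\<close> w1' wi _ c0 d0 C0] hx v0 step.prems
          by (auto simp: a_def x_def pic_last)
        then show ?thesis unfolding eq using \<open>l = n+1\<close> by simp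
      qed
    qed
  qed
  from this[of 1] show ?thesis using w1 by (simp add: a_def)
qed

theorem fval_eq_block_max:
  assumes "\<forall>i\<in>{1..n}. 0 \<le> c i" "\<forall>i\<in>{1..n}. 0 \<le> d i" "0 \<le> C"
    and "\<forall>i\<in>{1..n-1}. d (i+1) - d i \<le> c (i+1)"
  shows "fval n c d C s u = block_max (\<lambda>q l. pic n c d C q l * (u q - s q)) n 1"
proof (rule antisym)
  show "fval n c d C s u \<le> block_max (\<lambda>q l. pic n c d C q l * (u q - s q)) n 1"
    using fval_le_tail_cost[OF assms(1-3) waiting_time_feasible] waiting_time_cost_le_block_max
    by (rule order.trans)
  show "block_max (\<lambda>q l. pic n c d C q l * (u q - s q)) n 1 \<le> fval n c d C s u"
    using block_max_le_tail_cost[OF assms] by (intro le_fval)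
qed

section \<open>The coordinatewise constraints of the LP and the SOCP\<close>

text \<open>The left-hand side is concave and piecewise linear in \<open>t\<close> with its only kink at \<open>h\<close>,
  so on \<open>[L, U]\<close> it is bounded by its values at \<open>L\<close>, \<open>h\<close> and \<open>U\<close>.\<close>

lemma lp1_coordinate_bound:
  fixes \<pi> s L h U t \<rho> z :: real
  assumes "L \<le> t" "t \<le> U" "L \<le> h" "h \<le> U" "0 \<le> \<rho>"
  and z1: "z + \<pi> * s + \<bar>L - h\<bar> * \<rho> \<ge> \<pi> * L"
  and z2: "z + \<pi> * s \<ge> \<pi> * h"
  and z3: "z + \<pi> * s + \<bar>U - h\<bar> * \<rho> \<ge> \<pi> * U"
  shows "\<pi> * (t - s) - \<rho> * \<bar>t - h\<bar> \<le> z"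
proof (cases "h \<le> t")
  case True
  show ?thesis
  proof (cases "U = h")
    case True then show ?thesis using \<open>h \<le> t\<close> assms by (simp add: right_diff_distrib)
  next
    case False
    then have Uh: "0 < U - h" using assms by simp
    have id: "(U - h) * (\<pi> * (t - s) - \<rho> * (t - h)) = (U - t) * (\<pi> * (h - s)) + (t - h) * (\<pi> * (U - s) - \<rho> * (U - h))"
      by (simp add: algebra_simps)
    have "(U - t) * (\<pi> * (h - s)) \<le> (U - t) * z" using z2 assms by (intro mult_left_mono) (auto simp: algebra_simps)
    moreover have "(t - h) * (\<pi> * (U - s) - \<rho> * (U - h)) \<le> (t - h) * z"
      using z3 assms True by (intro mult_left_mono) (auto simp: algebra_simps)
    ultimately have "(U - h) * (\<pi> * (t - s) - \<rho> * (t - h)) \<le> (U - h) * z"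
      unfolding id by (simp add: algebra_simps)
    then have "\<pi> * (t - s) - \<rho> * (t - h) \<le> z" using Uh by simp
    then show ?thesis using True by simp
  qed
next
  case False
  show ?thesis
  proof (cases "L = h")
    case True then show ?thesis using False assms by (simp add: right_diff_distrib)
  next
    case nL: False
    then have hL: "0 < h - L" using assms by simp
    have id: "(h - L) * (\<pi> * (t - s) - \<rho> * (h - t)) = (t - L) * (\<pi> * (h - s)) + (h - t) * (\<pi> * (L - s) - \<rho> * (h - L))"
      by (simp add: algebra_simps)
    have "(t - L) * (\<pi> * (h - s)) \<le> (t - L) * z" using z2 assms by (intro mult_left_mono) (auto simp: algebra_simps)
    moreover have "(h - t) * (\<pi> * (L - s) - \<rho> * (h - L)) \<le> (h - t) * z"
      using z1 assms False by (intro mult_left_mono) (auto simp: algebra_simps)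
    ultimately have "(h - L) * (\<pi> * (t - s) - \<rho> * (h - t)) \<le> (h - L) * z"
      unfolding id by (simp add: algebra_simps)
    then have "\<pi> * (t - s) - \<rho> * (h - t) \<le> z" using hL by simp
    then show ?thesis using False by simp
  qed
qed

lemma socp_coordinate_bound:
  fixes \<pi> s L h U t \<rho> z bL bU r :: real
  assumes "L \<le> t" "t \<le> U" "0 \<le> \<rho>" "0 \<le> bL" "0 \<le> bU"
  and zc: "z + \<pi> * s - (U - h) * bU - (h - L) * bL - r \<ge> \<pi> * h"
  and sc: "sqrt ((\<pi> + bL - bU)\<^sup>2 + (r - \<rho>)\<^sup>2) \<le> r + \<rho>"
  shows "\<pi> * (t - s) - \<rho> * \<bar>t - h\<bar> ^ 2 \<le> z"
proof -
  define a where "a = \<pi> + bL - bU"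
  define e where "e = t - h"
  have "0 \<le> sqrt ((\<pi> + bL - bU)\<^sup>2 + (r - \<rho>)\<^sup>2)" by simp
  then have rp: "0 \<le> r + \<rho>" using sc by linarith
  have "a\<^sup>2 + (r - \<rho>)\<^sup>2 \<le> (r + \<rho>)\<^sup>2"
  proof -
    have X0: "0 \<le> a\<^sup>2 + (r - \<rho>)\<^sup>2" by simp
    have "(sqrt (a\<^sup>2 + (r - \<rho>)\<^sup>2))\<^sup>2 \<le> (r + \<rho>)\<^sup>2"
      by (rule power_mono[OF sc[folded a_def] real_sqrt_ge_zero]) simp
    then show ?thesis using X0 by simp
  qed
  then have a4: "a\<^sup>2 \<le> 4 * r * \<rho>" by (simp add: power2_eq_square algebra_simps)
  have key: "a * e \<le> \<rho> * e\<^sup>2 + r"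
  proof (cases "\<rho> = 0")
    case True
    then have "a = 0" using a4 by simp
    then show ?thesis using True rp by simp
  next
    case False
    then have rpos: "0 < \<rho>" using assms by simp
    have "4 * \<rho> * (\<rho> * e\<^sup>2 + r - a * e) = (2 * \<rho> * e - a)\<^sup>2 + (4 * r * \<rho> - a\<^sup>2)"
      by (simp add: power2_eq_square algebra_simps)
    also have "\<dots> \<ge> 0" using a4 by simp
    finally have "0 \<le> 4 * \<rho> * (\<rho> * e\<^sup>2 + r - a * e)" .
    then have "0 \<le> \<rho> * e\<^sup>2 + r - a * e" using rpos by (simp add: zero_le_mult_iff)
    then show ?thesis by simp
  qed
  have "\<pi> * e = a * e - bL * e + bU * e" unfolding a_def by (simp add: algebra_simps)
  moreover have "- bL * e \<le> bL * (h - L)"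
  proof -
    have "bL * (h - t) \<le> bL * (h - L)" using assms by (intro mult_left_mono) auto
    then show ?thesis unfolding e_def by (simp add: algebra_simps)
  qed
  moreover have "bU * e \<le> bU * (U - h)" using assms unfolding e_def by (simp add: mult_left_mono)
  ultimately have "\<pi> * e - \<rho> * e\<^sup>2 \<le> r + bL * (h - L) + bU * (U - h)" using key by linarith
  moreover have "\<pi> * (t - s) = \<pi> * (h - s) + \<pi> * e" unfolding e_def by (simp add: algebra_simps)
  moreover have "\<bar>t - h\<bar> ^ 2 = e\<^sup>2" unfolding e_def by simp
  ultimately show ?thesis using zc by (simp add: algebra_simps)
qed

lemma exists_best_of_three:
  fixes f :: "real \<Rightarrow> real"
  assumes "L \<le> h" "h \<le> U"
  obtains t where "L \<le> t" "t \<le> U" "f L \<le> f t" "f h \<le> f t" "f U \<le> f t"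
proof -
  consider "f h \<le> f L" "f U \<le> f L" | "f L \<le> f h" "f U \<le> f h" | "f L \<le> f U" "f h \<le> f U"
    by linarith
  then show ?thesis using that[of L] that[of h] that[of U] assms by cases auto
qed

lemma rotated_cone_tight:
  fixes \<rho> t h a r :: real
  assumes "0 \<le> \<rho>" "a = 2 * \<rho> * (t - h)" "r = \<rho> * (t - h)\<^sup>2"
  shows "sqrt (a\<^sup>2 + (r - \<rho>)\<^sup>2) \<le> r + \<rho>"
proof -
  have "a\<^sup>2 + (r - \<rho>)\<^sup>2 = (r + \<rho>)\<^sup>2" unfolding assms(2,3) by (simp add: power2_eq_square algebra_simps)
  moreover have "0 \<le> r + \<rho>" unfolding assms(3) using assms(1) by simp
  ultimately show ?thesis by simp
qed

lemma socp_coordinate_certificate: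
  fixes \<pi> s L h U \<rho> :: real
  assumes LU: "L \<le> h" "h \<le> U" and r0: "0 \<le> \<rho>"
  shows "\<exists>t bL bU r. L \<le> t \<and> t \<le> U \<and> 0 \<le> bL \<and> 0 \<le> bU \<and>
     (\<pi> * (t - s) - \<rho> * \<bar>t - h\<bar> ^ 2) + \<pi> * s - (U - h) * bU - (h - L) * bL - r \<ge> \<pi> * h \<and>
     sqrt ((\<pi> + bL - bU)\<^sup>2 + (r - \<rho>)\<^sup>2) \<le> r + \<rho>"
proof (cases "\<rho> = 0")
  case True
  show ?thesis
  proof (cases "0 \<le> \<pi>")
    case True
    show ?thesis using \<open>\<rho> = 0\<close> True LU
      by (intro exI[of _ U] exI[of _ 0] exI[of _ \<pi>] exI[of _ 0]) (auto simp: algebra_simps)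
  next
    case False
    show ?thesis using \<open>\<rho> = 0\<close> False LU
      by (intro exI[of _ L] exI[of _ "- \<pi>"] exI[of _ 0] exI[of _ 0]) (auto simp: algebra_simps)
  qed
next
  case False
  then have rp: "0 < \<rho>" using r0 by simp
  txt \<open>\<open>t0\<close> maximises \<open>\<pi> * t - \<rho> * (t - h)\<^sup>2\<close>; the certificate clips it to \<open>[L, U]\<close>, lets the
    multiplier of the active bound absorb the remaining slope, and makes the cone constraint tight.\<close>
  define t0 where "t0 = h + \<pi> / (2 * \<rho>)"
  have slope_eq: "\<pi> = 2 * \<rho> * (t0 - h)" unfolding t0_def using rp by simp
  consider (up) "U \<le> t0" | (lo) "t0 \<le> L" | (mid) "L < t0" "t0 < U" by linarith
  then show ?thesis
  proof cases
    case up
    have multiplier: "0 \<le> \<pi> - 2 * \<rho> * (U - h)" unfolding slope_eq using up rp by simp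
    have cone: "sqrt ((\<pi> + 0 - (\<pi> - 2 * \<rho> * (U - h)))\<^sup>2 + (\<rho> * (U - h)\<^sup>2 - \<rho>)\<^sup>2) \<le> \<rho> * (U - h)\<^sup>2 + \<rho>"
      by (rule rotated_cone_tight[OF r0, where t = U and h = h]) simp_all
    have epigraph: "\<pi> * h \<le> \<pi> * (U - s) - \<rho> * \<bar>U - h\<bar> ^ 2 + \<pi> * s - (U - h) * (\<pi> - 2 * \<rho> * (U - h)) - (h - L) * 0 - \<rho> * (U - h)\<^sup>2"
      by (simp add: power2_eq_square algebra_simps)
    have in_box: "L \<le> U" "U \<le> U" "(0::real) \<le> 0" using LU by auto
    show ?thesis by (rule exI[of _ U], rule exI[of _ 0], rule exI[of _ "\<pi> - 2 * \<rho> * (U - h)"],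
        rule exI[of _ "\<rho> * (U - h)\<^sup>2"]) (intro conjI multiplier cone epigraph in_box)
  next
    case lo
    have multiplier: "0 \<le> 2 * \<rho> * (L - h) - \<pi>" unfolding slope_eq using lo rp by simp
    have cone: "sqrt ((\<pi> + (2 * \<rho> * (L - h) - \<pi>) - 0)\<^sup>2 + (\<rho> * (L - h)\<^sup>2 - \<rho>)\<^sup>2) \<le> \<rho> * (L - h)\<^sup>2 + \<rho>"
      by (rule rotated_cone_tight[OF r0, where t = L and h = h]) simp_all
    have epigraph: "\<pi> * h \<le> \<pi> * (L - s) - \<rho> * \<bar>L - h\<bar> ^ 2 + \<pi> * s - (U - h) * 0 - (h - L) * (2 * \<rho> * (L - h) - \<pi>) - \<rho> * (L - h)\<^sup>2"
      by (simp add: power2_eq_square algebra_simps)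
    have in_box: "L \<le> L" "L \<le> U" "(0::real) \<le> 0" using LU by auto
    show ?thesis by (rule exI[of _ L], rule exI[of _ "2 * \<rho> * (L - h) - \<pi>"], rule exI[of _ 0],
        rule exI[of _ "\<rho> * (L - h)\<^sup>2"]) (intro conjI multiplier cone epigraph in_box)
  next
    case mid
    have cone: "sqrt ((\<pi> + 0 - 0)\<^sup>2 + (\<rho> * (t0 - h)\<^sup>2 - \<rho>)\<^sup>2) \<le> \<rho> * (t0 - h)\<^sup>2 + \<rho>"
      by (rule rotated_cone_tight[OF r0, where t = t0 and h = h]) (simp_all add: slope_eq)
    have epigraph: "\<pi> * h \<le> \<pi> * (t0 - s) - \<rho> * \<bar>t0 - h\<bar> ^ 2 + \<pi> * s - (U - h) * 0 - (h - L) * 0 - \<rho> * (t0 - h)\<^sup>2"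
      unfolding slope_eq by (simp add: power2_eq_square algebra_simps)
    have in_box: "L \<le> t0" "t0 \<le> U" "(0::real) \<le> 0" using mid by auto
    show ?thesis by (rule exI[of _ t0], rule exI[of _ 0], rule exI[of _ 0],
        rule exI[of _ "\<rho> * (t0 - h)\<^sup>2"]) (intro conjI cone epigraph in_box)
  qed
qed

lemma block_max_uniform_choice:
  fixes A :: "nat \<Rightarrow> nat \<Rightarrow> real \<Rightarrow> real" and T :: "nat \<Rightarrow> nat \<Rightarrow> real"
  assumes "i \<le> n + 1" and T: "\<forall>q\<in>{i..n}. \<forall>l\<in>{q..n+1}. T q l \<in> S q"
  shows "\<exists>u. (\<forall>q\<in>{i..n}. u q \<in> S q) \<and>
     block_max (\<lambda>q l. A q l (T q l)) n i \<le> block_max (\<lambda>q l. A q l (u q)) n i"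
  using assms
proof (induction i rule: backward_induct)
  case (step i)
  show ?case
  proof (cases "i \<le> n")
    case True
    obtain l where l: "l \<in> {i..n+1}" and eq: "block_max (\<lambda>q l. A q l (T q l)) n i =
        (\<Sum>q=i..min l n. A q l (T q l)) + block_max (\<lambda>q l. A q l (T q l)) n (Suc (min l n))"
      using block_max_attained[OF True] .
    obtain u' where u': "\<forall>q\<in>{Suc (min l n)..n}. u' q \<in> S q"
      and tail: "block_max (\<lambda>q l. A q l (T q l)) n (Suc (min l n)) \<le> block_max (\<lambda>q l. A q l (u' q)) n (Suc (min l n))"
    proof -
      have "i < Suc (min l n)" "Suc (min l n) \<le> n + 1" using l True by auto
      then show ?thesis using step.IH[of "Suc (min l n)"] step.prems that by auto
    qed
    define u where "u = (\<lambda>q. if q \<le> min l n then T q l else u' q)"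
    have "block_max (\<lambda>q l. A q l (u' q)) n (Suc (min l n)) = block_max (\<lambda>q l. A q l (u q)) n (Suc (min l n))"
      unfolding u_def by (intro block_max_cong) auto
    moreover have "(\<Sum>q=i..min l n. A q l (T q l)) = (\<Sum>q=i..min l n. A q l (u q))"
      unfolding u_def by (intro sum.cong) auto
    ultimately have "block_max (\<lambda>q l. A q l (T q l)) n i
        \<le> (\<Sum>q=i..min l n. A q l (u q)) + block_max (\<lambda>q l. A q l (u q)) n (Suc (min l n))"
      unfolding eq using tail by simp
    also have "\<dots> \<le> block_max (\<lambda>q l. A q l (u q)) n i"
      by (rule block_max_ge[OF True l])
    finally have "block_max (\<lambda>q l. A q l (T q l)) n i \<le> block_max (\<lambda>q l. A q l (u q)) n i" .
    moreover have "\<forall>q\<in>{i..n}. u q \<in> S q"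
      using u' step.prems l unfolding u_def by auto
    ultimately show ?thesis by (intro exI[of _ u] conjI)
  qed simp
qed

lemma box_set_iff:
  "u \<in> box_set n uL uU \<longleftrightarrow> (\<forall>q\<in>{1..n}. u q \<in> {uL q..uU q}) \<and> (\<forall>q. q \<notin> {1..n} \<longrightarrow> u q = 0)"
  unfolding box_set_def by auto

lemma fval_penalized_attains_block_max:
  assumes "\<forall>i\<in>{1..n}. 0 \<le> c i" "\<forall>i\<in>{1..n}. 0 \<le> d i" "0 \<le> C"
    and "\<forall>i\<in>{1..n-1}. d (i+1) - d i \<le> c (i+1)"
    and T: "\<forall>q\<in>{1..n}. \<forall>l\<in>{q..n+1}. T q l \<in> {uL q..uU q}"
  shows "\<exists>u\<in>box_set n uL uU. block_max (\<lambda>q l. pic n c d C q l * (T q l - s q) - \<rho> * \<phi> q (T q l)) n 1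
     \<le> fval n c d C s u - \<rho> * (\<Sum>q=1..n. \<phi> q (u q))"
proof -
  define A where "A = (\<lambda>q l t. pic n c d C q l * (t - s q) - \<rho> * \<phi> q t)"
  obtain u' where u': "\<forall>q\<in>{1..n}. u' q \<in> {uL q..uU q}"
    and le: "block_max (\<lambda>q l. A q l (T q l)) n 1 \<le> block_max (\<lambda>q l. A q l (u' q)) n 1"
    using block_max_uniform_choice[of 1 n T "\<lambda>q. {uL q..uU q}" A] T by auto
  define u where "u = (\<lambda>q. if q \<in> {1..n} then u' q else 0)"
  have "block_max (\<lambda>q l. A q l (u' q)) n 1 = block_max (\<lambda>q l. A q l (u q)) n 1"
    unfolding u_def by (intro block_max_cong) auto
  also have "\<dots> = block_max (\<lambda>q l. pic n c d C q l * (u q - s q)) n 1 - (\<Sum>q=1..n. \<rho> * \<phi> q (u q))"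
    unfolding A_def by (rule block_max_minus_index_term)
  also have "\<dots> = fval n c d C s u - \<rho> * (\<Sum>q=1..n. \<phi> q (u q))"
    by (simp add: fval_eq_block_max[OF assms(1-4)] sum_distrib_left)
  finally have "block_max (\<lambda>q l. A q l (T q l)) n 1 \<le> fval n c d C s u - \<rho> * (\<Sum>q=1..n. \<phi> q (u q))"
    using le by simp
  moreover have "u \<in> box_set n uL uU" using u' unfolding box_set_iff u_def by auto
  ultimately show ?thesis unfolding A_def by blast
qed

lemma fval_penalized_le_sum:
  assumes "\<forall>i\<in>{1..n}. 0 \<le> c i" "\<forall>i\<in>{1..n}. 0 \<le> d i" "0 \<le> C"
    and "\<forall>i\<in>{1..n-1}. d (i+1) - d i \<le> c (i+1)"
    and block: "\<forall>i\<in>{1..n}. \<forall>l\<in>{i..n+1}. (\<Sum>k=i..min l n. z k l) \<le> (\<Sum>k=i..min l n. g k)"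
    and coord: "\<forall>q\<in>{1..n}. \<forall>l\<in>{q..n+1}. pic n c d C q l * (u q - s q) - \<rho> * e q \<le> z q l"
  shows "fval n c d C s u - \<rho> * (\<Sum>q=1..n. e q) \<le> (\<Sum>q=1..n. g q)"
proof -
  have "fval n c d C s u - \<rho> * (\<Sum>q=1..n. e q)
      = block_max (\<lambda>q l. pic n c d C q l * (u q - s q) - \<rho> * e q) n 1"
    by (simp add: fval_eq_block_max[OF assms(1-4)] block_max_minus_index_term sum_distrib_left)
  also have "\<dots> \<le> (\<Sum>q=1..n. g q)"
  proof (rule block_max_le_sum)
    fix m l assume m: "m \<in> {1..n}" and l: "l \<in> {m..n+1}"
    have "(\<Sum>q=m..min l n. pic n c d C q l * (u q - s q) - \<rho> * e q) \<le> (\<Sum>q=m..min l n. z q l)"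
      using coord m l by (intro sum_mono) auto
    also have "\<dots> \<le> (\<Sum>q=m..min l n. g q)" using block m l by blast
    finally show "(\<Sum>q=m..min l n. pic n c d C q l * (u q - s q) - \<rho> * e q) \<le> (\<Sum>q=m..min l n. g q)" .
  qed
  finally show ?thesis .
qed

definition transport_cost :: "nat \<Rightarrow> nat \<Rightarrow> (nat \<Rightarrow> vec) \<Rightarrow> nat \<Rightarrow> vec \<Rightarrow> real" where
  "transport_cost p n uhat j u = (\<Sum>i=1..n. \<bar>u i - uhat j i\<bar> ^ p)"

lemma transport_cost_nonneg: "0 \<le> transport_cost p n uhat j u"
  unfolding transport_cost_def by (simp add: sum_nonneg)

lemma transport_cost_self: "1 \<le> p \<Longrightarrow> transport_cost p n uhat j (uhat j) = 0"
  unfolding transport_cost_def by simp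

lemma transport_cost_le_diameter:
  assumes "u \<in> box_set n uL uU" "uhat j \<in> box_set n uL uU"
  shows "transport_cost p n uhat j u \<le> (\<Sum>i=1..n. (uU i - uL i) ^ p)"
  unfolding transport_cost_def
proof (rule sum_mono)
  fix i assume "i \<in> {1..n}"
  then have "uL i \<le> u i \<and> u i \<le> uU i" "uL i \<le> uhat j i \<and> uhat j i \<le> uU i"
    using assms unfolding box_set_def by auto
  then have "\<bar>u i - uhat j i\<bar> \<le> uU i - uL i" by (simp add: abs_le_iff)
  then show "\<bar>u i - uhat j i\<bar> ^ p \<le> (uU i - uL i) ^ p" by (intro power_mono) auto
qed

lemma lp1_feas_sound:
  assumes "\<forall>i\<in>{1..n}. 0 \<le> c i" "\<forall>i\<in>{1..n}. 0 \<le> d i" "0 \<le> C"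
    and "\<forall>i\<in>{1..n-1}. d (i+1) - d i \<le> c (i+1)"
    and uh: "\<forall>j\<in>{1..N}. uhat j \<in> box_set n uL uU"
    and F: "lp1_feas n c d C T uL uU N uhat \<rho> s \<gamma> z"
  shows "s \<in> schedules n T \<and> 0 \<le> \<rho> \<and> (\<forall>j\<in>{1..N}. \<forall>u\<in>box_set n uL uU.
     fval n c d C s u - \<rho> * transport_cost 1 n uhat j u \<le> (\<Sum>i=1..n. \<gamma> i j))"
proof (intro conjI ballI)
  show "s \<in> schedules n T" and \<rho>: "0 \<le> \<rho>" using F unfolding lp1_feas_def by auto
  fix j u assume j: "j \<in> {1..N}" and u: "u \<in> box_set n uL uU"
  have "fval n c d C s u - \<rho> * (\<Sum>q=1..n. \<bar>u q - uhat j q\<bar>) \<le> (\<Sum>q=1..n. \<gamma> q j)"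
  proof (rule fval_penalized_le_sum[OF assms(1-4), where z = "\<lambda>k l. z k l j"])
    show "\<forall>i\<in>{1..n}. \<forall>l\<in>{i..n+1}. (\<Sum>k=i..min l n. z k l j) \<le> (\<Sum>k=i..min l n. \<gamma> k j)"
      using F j unfolding lp1_feas_def by blast
    show "\<forall>q\<in>{1..n}. \<forall>l\<in>{q..n+1}. pic n c d C q l * (u q - s q) - \<rho> * \<bar>u q - uhat j q\<bar> \<le> z q l j"
    proof (intro ballI)
      fix q l assume q: "q \<in> {1..n}" and l: "l \<in> {q..n+1}"
      have "uL q \<le> u q" "u q \<le> uU q" "uL q \<le> uhat j q" "uhat j q \<le> uU q"
        using u uh j q unfolding box_set_def by auto
      then show "pic n c d C q l * (u q - s q) - \<rho> * \<bar>u q - uhat j q\<bar> \<le> z q l j"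
        using lp1_coordinate_bound[OF _ _ _ _ \<rho>] F q l j unfolding lp1_feas_def by blast
    qed
  qed
  then show "fval n c d C s u - \<rho> * transport_cost 1 n uhat j u \<le> (\<Sum>i=1..n. \<gamma> i j)"
    unfolding transport_cost_def by simp
qed

lemma lp1_feas_exact:
  assumes "\<forall>i\<in>{1..n}. 0 \<le> c i" "\<forall>i\<in>{1..n}. 0 \<le> d i" "0 \<le> C"
    and "\<forall>i\<in>{1..n-1}. d (i+1) - d i \<le> c (i+1)"
    and uh: "\<forall>j\<in>{1..N}. uhat j \<in> box_set n uL uU"
    and s: "s \<in> schedules n T" and \<rho>: "0 \<le> \<rho>"
  shows "\<exists>\<gamma> z. lp1_feas n c d C T uL uU N uhat \<rho> s \<gamma> z \<and>
     (\<forall>j\<in>{1..N}. \<exists>u\<in>box_set n uL uU. (\<Sum>i=1..n. \<gamma> i j) \<le> fval n c d C s u - \<rho> * transport_cost 1 n uhat j u)"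
proof -
  define f where "f = (\<lambda>j q l t. pic n c d C q l * (t - s q) - \<rho> * \<bar>t - uhat j q\<bar>)"
  define good where "good = (\<lambda>j q l t. t \<in> {uL q..uU q} \<and>
     f j q l (uL q) \<le> f j q l t \<and> f j q l (uhat j q) \<le> f j q l t \<and> f j q l (uU q) \<le> f j q l t)"
  have "\<forall>j\<in>{1..N}. \<forall>q\<in>{1..n}. \<forall>l. \<exists>t. good j q l t"
  proof (intro ballI allI)
    fix j q l assume "j \<in> {1..N}" "q \<in> {1..n}"
    then have "uL q \<le> uhat j q" "uhat j q \<le> uU q" using uh unfolding box_set_def by auto
    then show "\<exists>t. good j q l t"
      using exists_best_of_three[of "uL q" "uhat j q" "uU q" "f j q l"] unfolding good_def by auto
  qed
  then obtain worst where worst: "\<forall>j\<in>{1..N}. \<forall>q\<in>{1..n}. \<forall>l. good j q l (worst j q l)"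
    by metis
  define z where "z = (\<lambda>q l j. f j q l (worst j q l))"
  define \<gamma> where "\<gamma> = (\<lambda>q j. block_max (\<lambda>q l. z q l j) n q - block_max (\<lambda>q l. z q l j) n (Suc q))"
  have "lp1_feas n c d C T uL uU N uhat \<rho> s \<gamma> z"
    unfolding lp1_feas_def
  proof (intro conjI ballI s \<rho>)
    fix i l j assume i: "i \<in> {1..n}" and l: "l \<in> {i..n+1}" and j: "j \<in> {1..N}"
    show "(\<Sum>k=i..min l n. \<gamma> k j) \<ge> (\<Sum>k=i..min l n. z k l j)"
      unfolding \<gamma>_def using i l by (intro block_sum_le_block_max_diff) auto
    have "f j i l (uL i) \<le> z i l j" "f j i l (uhat j i) \<le> z i l j" "f j i l (uU i) \<le> z i l j"
      using worst i j unfolding good_def z_def by auto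
    then show "z i l j + pic n c d C i l * s i + \<bar>uL i - uhat j i\<bar> * \<rho> \<ge> pic n c d C i l * uL i"
      and "z i l j + pic n c d C i l * s i \<ge> pic n c d C i l * uhat j i"
      and "z i l j + pic n c d C i l * s i + \<bar>uU i - uhat j i\<bar> * \<rho> \<ge> pic n c d C i l * uU i"
      unfolding f_def by (simp_all add: algebra_simps)
  qed
  moreover have "\<exists>u\<in>box_set n uL uU. (\<Sum>i=1..n. \<gamma> i j) \<le> fval n c d C s u - \<rho> * transport_cost 1 n uhat j u"
    if j: "j \<in> {1..N}" for j
  proof -
    have "\<forall>q\<in>{1..n}. \<forall>l\<in>{q..n+1}. worst j q l \<in> {uL q..uU q}"
      using worst j unfolding good_def by blast
    note fval_penalized_attains_block_max[OF assms(1-4) this, of s \<rho> "\<lambda>q t. \<bar>t - uhat j q\<bar>"]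
    moreover have "(\<Sum>i=1..n. \<gamma> i j) = block_max (\<lambda>q l. z q l j) n 1"
      unfolding \<gamma>_def by (rule sum_block_max_diff) simp
    ultimately show ?thesis
      unfolding z_def f_def transport_cost_def by simp
  qed
  ultimately show ?thesis by blast
qed

lemma socp_feas_sound:
  assumes "\<forall>i\<in>{1..n}. 0 \<le> c i" "\<forall>i\<in>{1..n}. 0 \<le> d i" "0 \<le> C"
    and "\<forall>i\<in>{1..n-1}. d (i+1) - d i \<le> c (i+1)"
    and F: "socp_feas n c d C T uL uU N uhat \<rho> s \<gamma> z \<beta>L \<beta>U r"
  shows "s \<in> schedules n T \<and> 0 \<le> \<rho> \<and> (\<forall>j\<in>{1..N}. \<forall>u\<in>box_set n uL uU.
     fval n c d C s u - \<rho> * transport_cost 2 n uhat j u \<le> (\<Sum>i=1..n. \<gamma> i j))"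
proof (intro conjI ballI)
  show "s \<in> schedules n T" and \<rho>: "0 \<le> \<rho>" using F unfolding socp_feas_def by auto
  fix j u assume j: "j \<in> {1..N}" and u: "u \<in> box_set n uL uU"
  have "fval n c d C s u - \<rho> * (\<Sum>q=1..n. \<bar>u q - uhat j q\<bar> ^ 2) \<le> (\<Sum>q=1..n. \<gamma> q j)"
  proof (rule fval_penalized_le_sum[OF assms(1-4), where z = "\<lambda>k l. z k l j"])
    show "\<forall>i\<in>{1..n}. \<forall>l\<in>{i..n+1}. (\<Sum>k=i..min l n. z k l j) \<le> (\<Sum>k=i..min l n. \<gamma> k j)"
      using F j unfolding socp_feas_def by blast
    show "\<forall>q\<in>{1..n}. \<forall>l\<in>{q..n+1}. pic n c d C q l * (u q - s q) - \<rho> * \<bar>u q - uhat j q\<bar> ^ 2 \<le> z q l j"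
    proof (intro ballI)
      fix q l assume q: "q \<in> {1..n}" and l: "l \<in> {q..n+1}"
      have "uL q \<le> u q" "u q \<le> uU q" using u q unfolding box_set_def by auto
      then show "pic n c d C q l * (u q - s q) - \<rho> * \<bar>u q - uhat j q\<bar> ^ 2 \<le> z q l j"
        using socp_coordinate_bound[OF _ _ \<rho>] F q l j unfolding socp_feas_def by blast
    qed
  qed
  then show "fval n c d C s u - \<rho> * transport_cost 2 n uhat j u \<le> (\<Sum>i=1..n. \<gamma> i j)"
    unfolding transport_cost_def by simp
qed

lemma socp_feas_exact:
  assumes "\<forall>i\<in>{1..n}. 0 \<le> c i" "\<forall>i\<in>{1..n}. 0 \<le> d i" "0 \<le> C"
    and "\<forall>i\<in>{1..n-1}. d (i+1) - d i \<le> c (i+1)"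
    and uh: "\<forall>j\<in>{1..N}. uhat j \<in> box_set n uL uU"
    and s: "s \<in> schedules n T" and \<rho>: "0 \<le> \<rho>"
  shows "\<exists>\<gamma> z \<beta>L \<beta>U r. socp_feas n c d C T uL uU N uhat \<rho> s \<gamma> z \<beta>L \<beta>U r \<and>
     (\<forall>j\<in>{1..N}. \<exists>u\<in>box_set n uL uU. (\<Sum>i=1..n. \<gamma> i j) \<le> fval n c d C s u - \<rho> * transport_cost 2 n uhat j u)"
proof -
  define f where "f = (\<lambda>j q l t. pic n c d C q l * (t - s q) - \<rho> * \<bar>t - uhat j q\<bar> ^ 2)"
  define good where "good = (\<lambda>j q l t bL bU r. t \<in> {uL q..uU q} \<and> 0 \<le> bL \<and> 0 \<le> bU \<and>
     f j q l t + pic n c d C q l * s q - (uU q - uhat j q) * bU - (uhat j q - uL q) * bL - r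
       \<ge> pic n c d C q l * uhat j q \<and>
     sqrt ((pic n c d C q l + bL - bU)\<^sup>2 + (r - \<rho>)\<^sup>2) \<le> r + \<rho>)"
  have "\<forall>j\<in>{1..N}. \<forall>q\<in>{1..n}. \<forall>l. \<exists>t bL bU r. good j q l t bL bU r"
  proof (intro ballI allI)
    fix j q l assume "j \<in> {1..N}" "q \<in> {1..n}"
    then have "uL q \<le> uhat j q" "uhat j q \<le> uU q" using uh unfolding box_set_def by auto
    then show "\<exists>t bL bU r. good j q l t bL bU r"
      using socp_coordinate_certificate[OF _ _ \<rho>, of "uL q" "uhat j q" "uU q" "pic n c d C q l" "s q"]
      unfolding good_def f_def by auto
  qed
  then obtain worst bL bU r
    where good: "\<forall>j\<in>{1..N}. \<forall>q\<in>{1..n}. \<forall>l. good j q l (worst j q l) (bL j q l) (bU j q l) (r j q l)"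
    by metis
  define \<beta>L where "\<beta>L = (\<lambda>q l j. bL j q l)"
  define \<beta>U where "\<beta>U = (\<lambda>q l j. bU j q l)"
  define z where "z = (\<lambda>q l j. f j q l (worst j q l))"
  define \<gamma> where "\<gamma> = (\<lambda>q j. block_max (\<lambda>q l. z q l j) n q - block_max (\<lambda>q l. z q l j) n (Suc q))"
  have "socp_feas n c d C T uL uU N uhat \<rho> s \<gamma> z \<beta>L \<beta>U (\<lambda>q l j. r j q l)"
    unfolding socp_feas_def
  proof (intro conjI ballI s \<rho>)
    fix i l j assume i: "i \<in> {1..n}" and l: "l \<in> {i..n+1}" and j: "j \<in> {1..N}"
    show "(\<Sum>k=i..min l n. \<gamma> k j) \<ge> (\<Sum>k=i..min l n. z k l j)"
      unfolding \<gamma>_def using i l by (intro block_sum_le_block_max_diff) auto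
    show "z i l j + pic n c d C i l * s i - (uU i - uhat j i) * \<beta>U i l j
          - (uhat j i - uL i) * \<beta>L i l j - r j i l \<ge> pic n c d C i l * uhat j i"
      and "sqrt ((pic n c d C i l + \<beta>L i l j - \<beta>U i l j)\<^sup>2 + (r j i l - \<rho>)\<^sup>2) \<le> r j i l + \<rho>"
      and "0 \<le> \<beta>L i l j" and "0 \<le> \<beta>U i l j"
      using good i j unfolding good_def z_def \<beta>L_def \<beta>U_def by auto
  qed
  moreover have "\<exists>u\<in>box_set n uL uU. (\<Sum>i=1..n. \<gamma> i j) \<le> fval n c d C s u - \<rho> * transport_cost 2 n uhat j u"
    if j: "j \<in> {1..N}" for j
  proof -
    have "\<forall>q\<in>{1..n}. \<forall>l\<in>{q..n+1}. worst j q l \<in> {uL q..uU q}"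
      using good j unfolding good_def by blast
    note fval_penalized_attains_block_max[OF assms(1-4) this, of s \<rho> "\<lambda>q t. \<bar>t - uhat j q\<bar> ^ 2"]
    moreover have "(\<Sum>i=1..n. \<gamma> i j) = block_max (\<lambda>q l. z q l j) n 1"
      unfolding \<gamma>_def by (rule sum_block_max_diff) simp
    ultimately show ?thesis
      unfolding z_def f_def transport_cost_def by simp
  qed
  ultimately show ?thesis by blast
qed

section \<open>Empirical distributions and couplings\<close>

lemma coordinate_measurable [measurable]: "(\<lambda>x::vec. x i) \<in> borel_measurable borel"
  by (intro borel_measurable_continuous_onI continuous_on_product_coordinates)

lemma block_max_measurable:
  assumes "\<And>q l. (\<lambda>x. a x q l) \<in> borel_measurable M"
  shows "(\<lambda>x. block_max (a x) n i) \<in> borel_measurable M"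
proof (cases "i \<le> n")
  case True
  then show ?thesis
  proof (induction i rule: backward_induct)
    case (step i)
    have "(\<lambda>x. Max ((\<lambda>l. (\<Sum>q=i..min l n. a x q l) + block_max (a x) n (Suc (min l n))) ` {i..n+1}))
        \<in> borel_measurable M"
    proof (rule borel_measurable_Max)
      fix l assume l: "l \<in> {i..n+1}"
      have "(\<lambda>x. block_max (a x) n (Suc (min l n))) \<in> borel_measurable M"
        using step.IH[of "Suc (min l n)"] l by (cases "Suc (min l n) \<le> n") auto
      then show "(\<lambda>x. (\<Sum>q=i..min l n. a x q l) + block_max (a x) n (Suc (min l n))) \<in> borel_measurable M"
        using assms by measurable
    qed simp
    then show ?case
      using block_max_eq[OF step.hyps] by simp
  qed
qed simp

lemma fval_measurable:
  assumes "\<forall>i\<in>{1..n}. 0 \<le> c i" "\<forall>i\<in>{1..n}. 0 \<le> d i" "0 \<le> C"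
    and "\<forall>i\<in>{1..n-1}. d (i+1) - d i \<le> c (i+1)"
  shows "(\<lambda>u. fval n c d C s u) \<in> borel_measurable borel"
  unfolding fval_eq_block_max[OF assms] by (rule block_max_measurable) measurable

lemma box_set_sets [measurable]: "box_set n uL uU \<in> sets (borel :: vec measure)"
proof -
  have "box_set n uL uU = (\<Inter>i\<in>{1..n}. {u. uL i \<le> u i} \<inter> {u. u i \<le> uU i}) \<inter> (\<Inter>i\<in>-{1..n}. {u. u i = 0})"
    unfolding box_set_def by auto
  also have "\<dots> \<in> sets borel"
    by measurable
  finally show ?thesis .
qed

lemma uniform_measure_count_space_eq_pmf_of_set:
  assumes "S \<noteq> {}" "finite S"
  shows "uniform_measure (count_space UNIV) S = measure_pmf (pmf_of_set S)"
proof (rule measure_eqI)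
  fix A assume "A \<in> sets (uniform_measure (count_space UNIV) S)"
  have "emeasure (uniform_measure (count_space UNIV) S) A = of_nat (card (A \<inter> S)) / of_nat (card S)"
    using assms by (subst emeasure_uniform_measure) (auto simp: Int_commute emeasure_count_space)
  also have "\<dots> = emeasure (measure_pmf (pmf_of_set S)) A"
    using assms by (subst emeasure_pmf_of_set)
      (auto simp: Int_commute divide_ennreal ennreal_of_nat_eq_real_of_nat card_gt_0_iff)
  finally show "emeasure (uniform_measure (count_space UNIV) S) A = emeasure (measure_pmf (pmf_of_set S)) A" .
qed simp

lemma empirical_eq_distr_pmf:
  "1 \<le> N \<Longrightarrow> empirical N uhat = distr (measure_pmf (pmf_of_set {1..N})) borel uhat"
  unfolding empirical_def by (subst uniform_measure_count_space_eq_pmf_of_set) auto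

lemma nn_integral_empirical:
  assumes "1 \<le> N" "g \<in> borel_measurable borel"
  shows "(\<integral>\<^sup>+ v. g v \<partial>empirical N uhat) = (\<Sum>j=1..N. g (uhat j)) / of_nat N"
  unfolding empirical_eq_distr_pmf[OF assms(1)] using assms
  by (subst nn_integral_distr) (auto simp: nn_integral_pmf_of_set)

lemma AE_empirical_samples:
  assumes "1 \<le> N"
  shows "AE v in empirical N uhat. v \<in> uhat ` {1..N}"
proof -
  have "AE j in measure_pmf (pmf_of_set {1..N}). uhat j \<in> uhat ` {1..N}"
    using assms by (auto simp: AE_measure_pmf_iff)
  moreover have "uhat ` {1..N} \<in> sets borel"
    by (intro borel_closed finite_imp_closed) simp
  ultimately show ?thesis
    unfolding empirical_eq_distr_pmf[OF assms] by (subst AE_distr_iff) auto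
qed

lemma sample_envelope:
  fixes \<Gamma> :: "nat \<Rightarrow> real" and uhat :: "nat \<Rightarrow> vec"
  assumes "\<forall>j\<in>{1..N}. 0 \<le> \<Gamma> j"
  obtains h :: "vec \<Rightarrow> real" where "h \<in> borel_measurable borel" "\<And>v. 0 \<le> h v"
    and "\<And>j. j \<in> {1..N} \<Longrightarrow> h (uhat j) \<le> \<Gamma> j"
    and "\<And>v. v \<in> uhat ` {1..N} \<Longrightarrow> \<exists>j\<in>{1..N}. uhat j = v \<and> h v = \<Gamma> j"
proof -
  define S where "S = uhat ` {1..N}"
  define h where "h = (\<lambda>v. if v \<in> S then Min (\<Gamma> ` {j\<in>{1..N}. uhat j = v}) else 0)"
  have attained: "\<exists>j\<in>{1..N}. uhat j = v \<and> h v = \<Gamma> j" if "v \<in> S" for v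
  proof -
    have "Min (\<Gamma> ` {j\<in>{1..N}. uhat j = v}) \<in> \<Gamma> ` {j\<in>{1..N}. uhat j = v}"
      using that unfolding S_def by (intro Min_in) auto
    then show ?thesis using that unfolding h_def by auto
  qed
  show ?thesis
  proof
    show "h \<in> borel_measurable borel"
    proof (rule measurable_discrete_difference[where f = "\<lambda>_. 0" and X = S])
      show "countable S" unfolding S_def by (simp add: countable_finite)
      show "{x} \<in> sets borel" for x :: vec by simp
    qed (auto simp: h_def)
    show "0 \<le> h v" for v
      using attained[of v] assms by (cases "v \<in> S") (auto simp: h_def)
    show "h (uhat j) \<le> \<Gamma> j" if "j \<in> {1..N}" for j
      using that unfolding h_def S_def by (auto intro!: Min_le)
  qed (use attained S_def in blast)
qed

lemma pair_cost_measurable [measurable]: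
  "(\<lambda>x::vec \<times> vec. \<Sum>i=1..n. \<bar>fst x i - snd x i\<bar> ^ p) \<in> borel_measurable (borel \<Otimes>\<^sub>M borel)"
  by measurable

lemma nn_integral_empirical_le_mean:
  assumes N1: "1 \<le> N" and "h \<in> borel_measurable borel" "\<And>v. 0 \<le> h v"
    and h_le: "\<And>j. j \<in> {1..N} \<Longrightarrow> h (uhat j) \<le> \<Gamma> j" and \<Gamma>: "\<forall>j\<in>{1..N}. 0 \<le> \<Gamma> j"
  shows "(\<integral>\<^sup>+v. ennreal (h v) \<partial>empirical N uhat) \<le> ennreal ((1 / real N) * (\<Sum>j=1..N. \<Gamma> j))"
proof -
  have "(\<Sum>j=1..N. ennreal (h (uhat j))) \<le> (\<Sum>j=1..N. ennreal (\<Gamma> j))"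
    using h_le by (intro sum_mono ennreal_leI) auto
  also have "\<dots> = ennreal (\<Sum>j=1..N. \<Gamma> j)" using \<Gamma> by (intro sum_ennreal) auto
  finally have "(\<Sum>j=1..N. ennreal (h (uhat j))) / of_nat N \<le> ennreal (\<Sum>j=1..N. \<Gamma> j) / of_nat N"
    by (intro divide_right_mono_ennreal)
  also have "\<dots> = ennreal ((\<Sum>j=1..N. \<Gamma> j) / real N)"
    using N1 \<Gamma> by (subst divide_ennreal[symmetric]) (auto simp: ennreal_of_nat_eq_real_of_nat intro: sum_nonneg)
  finally show ?thesis using assms by (simp add: nn_integral_empirical)
qed

lemma nn_integral_le_coupling_cost:
  fixes F :: "vec \<Rightarrow> real" and \<Gamma> :: "nat \<Rightarrow> real"
  assumes N1: "1 \<le> N" and Fm: "F \<in> borel_measurable borel" and F0: "\<forall>u. 0 \<le> F u"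
    and r0: "0 \<le> \<rho>" and G0: "\<forall>j\<in>{1..N}. 0 \<le> \<Gamma> j"
    and bound: "\<forall>j\<in>{1..N}. \<forall>u\<in>box_set n uL uU. F u - \<rho> * transport_cost p n uhat j u \<le> \<Gamma> j"
    and P: "P \<in> couplings Q (empirical N uhat)" and Qbox: "AE u in Q. u \<in> box_set n uL uU"
  shows "(\<integral>\<^sup>+u. ennreal (F u) \<partial>Q) \<le> ennreal ((1 / real N) * (\<Sum>j=1..N. \<Gamma> j))
    + ennreal \<rho> * (\<integral>\<^sup>+x. ennreal (\<Sum>i=1..n. \<bar>fst x i - snd x i\<bar> ^ p) \<partial>P)"
proof -
  obtain h where hm: "h \<in> borel_measurable borel" and h0: "\<And>v. 0 \<le> h v"
    and h_le: "\<And>j. j \<in> {1..N} \<Longrightarrow> h (uhat j) \<le> \<Gamma> j"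
    and h_eq: "\<And>v. v \<in> uhat ` {1..N} \<Longrightarrow> \<exists>j\<in>{1..N}. uhat j = v \<and> h v = \<Gamma> j"
    using sample_envelope[OF G0] by blast
  have sP: "sets P = sets (borel \<Otimes>\<^sub>M borel)" and dfst: "distr P borel fst = Q"
    and dsnd: "distr P borel snd = empirical N uhat"
    using P unfolding couplings_def by auto
  have mfst: "fst \<in> measurable P borel" and msnd: "snd \<in> measurable P borel"
    using measurable_cong_sets[OF sP refl] by (metis measurable_fst, metis measurable_snd)
  have cost_m: "(\<lambda>x. \<Sum>i=1..n. \<bar>fst x i - snd x i\<bar> ^ p) \<in> borel_measurable P"
    using measurable_cong_sets[OF sP refl] pair_cost_measurable by blast
  have AE_fst: "AE x in P. fst x \<in> box_set n uL uU"
    using Qbox unfolding dfst[symmetric] by (rule AE_distrD[OF mfst])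
  have AE_snd: "AE x in P. snd x \<in> uhat ` {1..N}"
    using AE_empirical_samples[OF N1, of uhat] unfolding dsnd[symmetric] by (rule AE_distrD[OF msnd])
  have "(\<integral>\<^sup>+u. ennreal (F u) \<partial>Q) = (\<integral>\<^sup>+x. ennreal (F (fst x)) \<partial>P)"
    unfolding dfst[symmetric] using Fm mfst by (subst nn_integral_distr) auto
  also have "\<dots> \<le> (\<integral>\<^sup>+x. ennreal (h (snd x)) + ennreal (\<rho> * (\<Sum>i=1..n. \<bar>fst x i - snd x i\<bar> ^ p)) \<partial>P)"
  proof (rule nn_integral_mono_AE)
    show "AE x in P. ennreal (F (fst x)) \<le> ennreal (h (snd x)) + ennreal (\<rho> * (\<Sum>i=1..n. \<bar>fst x i - snd x i\<bar> ^ p))"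
      using AE_fst AE_snd
    proof eventually_elim
      case (elim x)
      obtain j where j: "j \<in> {1..N}" "uhat j = snd x" "h (snd x) = \<Gamma> j" using h_eq elim(2) by blast
      have "F (fst x) - \<rho> * transport_cost p n uhat j (fst x) \<le> \<Gamma> j" using bound j elim(1) by blast
      then have "F (fst x) \<le> h (snd x) + \<rho> * (\<Sum>i=1..n. \<bar>fst x i - snd x i\<bar> ^ p)"
        using j unfolding transport_cost_def by simp
      moreover have "0 \<le> \<rho> * (\<Sum>i=1..n. \<bar>fst x i - snd x i\<bar> ^ p)" using r0 by (simp add: sum_nonneg)
      ultimately show ?case using h0 by (simp add: ennreal_plus[symmetric] del: ennreal_plus)
    qed
  qed
  also have "\<dots> = (\<integral>\<^sup>+x. ennreal (h (snd x)) \<partial>P) + (\<integral>\<^sup>+x. ennreal (\<rho> * (\<Sum>i=1..n. \<bar>fst x i - snd x i\<bar> ^ p)) \<partial>P)"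
    using hm msnd cost_m by (intro nn_integral_add) auto
  also have "(\<integral>\<^sup>+x. ennreal (h (snd x)) \<partial>P) = (\<integral>\<^sup>+v. ennreal (h v) \<partial>empirical N uhat)"
    unfolding dsnd[symmetric] using hm msnd by (subst nn_integral_distr) auto
  also have "\<dots> \<le> ennreal ((1 / real N) * (\<Sum>j=1..N. \<Gamma> j))"
    using N1 hm h0 h_le G0 by (rule nn_integral_empirical_le_mean)
  also have "(\<integral>\<^sup>+x. ennreal (\<rho> * (\<Sum>i=1..n. \<bar>fst x i - snd x i\<bar> ^ p)) \<partial>P)
      = ennreal \<rho> * (\<integral>\<^sup>+x. ennreal (\<Sum>i=1..n. \<bar>fst x i - snd x i\<bar> ^ p) \<partial>P)"
    using cost_m r0 by (subst nn_integral_cmult[symmetric]) (auto simp: ennreal_mult sum_nonneg intro!: nn_integral_cong)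
  finally show ?thesis by simp
qed

lemma nn_integral_le_dual_bound:
  fixes F :: "vec \<Rightarrow> real" and \<Gamma> :: "nat \<Rightarrow> real"
  assumes N1: "1 \<le> N" and p1: "1 \<le> p" and Fm: "F \<in> borel_measurable borel" and F0: "\<forall>u. 0 \<le> F u"
    and Q: "Q \<in> wball p n uL uU N uhat \<epsilon>" and e0: "0 < \<epsilon>" and r0: "0 \<le> \<rho>"
    and bound: "\<forall>j\<in>{1..N}. \<forall>u\<in>box_set n uL uU. F u - \<rho> * transport_cost p n uhat j u \<le> \<Gamma> j"
    and uh: "\<forall>j\<in>{1..N}. uhat j \<in> box_set n uL uU"
  shows "(\<integral>\<^sup>+u. ennreal (F u) \<partial>Q) \<le> ennreal (\<epsilon> ^ p * \<rho> + (1 / real N) * (\<Sum>j=1..N. \<Gamma> j))"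
proof (rule ennreal_le_epsilon)
  fix e :: real assume e: "0 < e"
  have G0: "\<forall>j\<in>{1..N}. 0 \<le> \<Gamma> j"
    using bound uh F0 transport_cost_self[OF p1] by (metis diff_zero mult_zero_right order.trans)
  define \<eta> where "\<eta> = e / (\<rho> + 1)"
  have \<eta>: "0 < \<eta>" "\<rho> * \<eta> \<le> e"
    unfolding \<eta>_def using e r0 by (auto simp: field_simps)
  have W: "wass_pow p n Q (empirical N uhat) \<le> ennreal (\<epsilon> ^ p)" and Qbox: "AE u in Q. u \<in> box_set n uL uU"
    using Q unfolding wball_def by auto
  have "ennreal (\<epsilon> ^ p) < ennreal (\<epsilon> ^ p + \<eta>)"
    using \<eta> e0 by (intro ennreal_lessI) (auto intro: add_nonneg_pos)
  with W have "wass_pow p n Q (empirical N uhat) < ennreal (\<epsilon> ^ p + \<eta>)"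
    by (rule le_less_trans)
  then obtain P where P: "P \<in> couplings Q (empirical N uhat)"
    and cost: "(\<integral>\<^sup>+ x. ennreal (\<Sum>i=1..n. \<bar>fst x i - snd x i\<bar> ^ p) \<partial>P) < ennreal (\<epsilon> ^ p + \<eta>)"
    unfolding wass_pow_def by (auto simp: INF_less_iff)
  have avg0: "0 \<le> (1 / real N) * (\<Sum>j=1..N. \<Gamma> j)" using G0 by (intro mult_nonneg_nonneg sum_nonneg) auto
  have "(\<integral>\<^sup>+u. ennreal (F u) \<partial>Q) \<le> ennreal ((1 / real N) * (\<Sum>j=1..N. \<Gamma> j)) + ennreal \<rho> * ennreal (\<epsilon> ^ p + \<eta>)"
    using nn_integral_le_coupling_cost[OF N1 Fm F0 r0 G0 bound P Qbox] cost
    by (meson add_left_mono dual_order.trans less_imp_le mult_left_mono zero_le)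
  also have "\<dots> = ennreal ((1 / real N) * (\<Sum>j=1..N. \<Gamma> j) + \<rho> * (\<epsilon> ^ p + \<eta>))"
    using avg0 r0 \<eta> e0 by (simp add: ennreal_mult ennreal_plus)
  also have "\<dots> \<le> ennreal (\<epsilon> ^ p * \<rho> + (1 / real N) * (\<Sum>j=1..N. \<Gamma> j) + e)"
    using \<eta> by (intro ennreal_leI) (simp add: algebra_simps)
  also have "\<dots> = ennreal (\<epsilon> ^ p * \<rho> + (1 / real N) * (\<Sum>j=1..N. \<Gamma> j)) + ennreal e"
    using avg0 r0 e e0 by (simp add: ennreal_plus)
  finally show "(\<integral>\<^sup>+u. ennreal (F u) \<partial>Q) \<le> ennreal (\<epsilon> ^ p * \<rho> + (1 / real N) * (\<Sum>j=1..N. \<Gamma> j)) + ennreal e" .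
qed

lemma nn_integral_uniform_bernoulli:
  fixes g :: "nat \<times> bool \<Rightarrow> real"
  assumes N1: "1 \<le> N" and \<theta>: "0 \<le> \<theta>" "\<theta> \<le> 1" and g0: "\<And>x. 0 \<le> g x"
  shows "(\<integral>\<^sup>+x. ennreal (g x) \<partial>measure_pmf (pair_pmf (pmf_of_set {1..N}) (bernoulli_pmf \<theta>)))
     = ennreal ((1 / real N) * (\<Sum>j=1..N. \<theta> * g (j, True) + (1 - \<theta>) * g (j, False)))"
proof -
  have inner: "\<And>a. (\<integral>\<^sup>+b. ennreal (g (a, b)) \<partial>measure_pmf (bernoulli_pmf \<theta>)) = ennreal (\<theta> * g (a, True) + (1 - \<theta>) * g (a, False))"
    using \<theta> g0 by (simp add: ennreal_plus[symmetric] ennreal_mult[symmetric] mult.commute del: ennreal_plus)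
  have "(\<integral>\<^sup>+x. ennreal (g x) \<partial>measure_pmf (pair_pmf (pmf_of_set {1..N}) (bernoulli_pmf \<theta>)))
      = (\<integral>\<^sup>+a. ennreal (\<theta> * g (a, True) + (1 - \<theta>) * g (a, False)) \<partial>measure_pmf (pmf_of_set {1..N}))"
    by (simp add: nn_integral_pair_pmf' inner)
  also have "\<dots> = (\<Sum>j=1..N. ennreal (\<theta> * g (j, True) + (1 - \<theta>) * g (j, False))) / of_nat N"
    using N1 by (subst nn_integral_pmf_of_set) auto
  also have "\<dots> = ennreal (\<Sum>j=1..N. \<theta> * g (j, True) + (1 - \<theta>) * g (j, False)) / of_nat N"
    using \<theta> g0 by (subst sum_ennreal) (auto intro!: add_nonneg_nonneg mult_nonneg_nonneg)
  also have "\<dots> = ennreal ((\<Sum>j=1..N. \<theta> * g (j, True) + (1 - \<theta>) * g (j, False)) / real N)"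
    using N1 \<theta> g0 by (subst divide_ennreal[symmetric]) (auto simp: ennreal_of_nat_eq_real_of_nat intro!: sum_nonneg add_nonneg_nonneg mult_nonneg_nonneg)
  finally show ?thesis by simp
qed

lemma pmf_coupling_with_empirical:
  fixes \<mu> :: "(nat \<times> 'b) pmf" and pt :: "nat \<times> 'b \<Rightarrow> vec"
  assumes "1 \<le> N" "map_pmf fst \<mu> = pmf_of_set {1..N}"
  shows "distr (measure_pmf \<mu>) (borel \<Otimes>\<^sub>M borel) (\<lambda>y. (pt y, uhat (fst y)))
    \<in> couplings (distr (measure_pmf \<mu>) borel pt) (empirical N uhat)"
  unfolding couplings_def
proof (intro CollectI conjI)
  show "prob_space (distr (measure_pmf \<mu>) (borel \<Otimes>\<^sub>M borel) (\<lambda>y. (pt y, uhat (fst y))))"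
    by (intro measure_pmf.prob_space_distr) (simp add: space_pair_measure)
  show "distr (distr (measure_pmf \<mu>) (borel \<Otimes>\<^sub>M borel) (\<lambda>y. (pt y, uhat (fst y)))) borel fst
      = distr (measure_pmf \<mu>) borel pt"
    by (subst distr_distr) (auto simp: comp_def space_pair_measure)
  have "distr (distr (measure_pmf \<mu>) (borel \<Otimes>\<^sub>M borel) (\<lambda>y. (pt y, uhat (fst y)))) borel snd
      = distr (distr (measure_pmf \<mu>) (count_space UNIV) fst) borel uhat"
    by (subst distr_distr, simp, simp, subst distr_distr) (auto simp: comp_def space_pair_measure)
  also have "\<dots> = empirical N uhat"
    unfolding map_pmf_rep_eq[symmetric] assms(2) empirical_eq_distr_pmf[OF assms(1)] ..
  finally show "distr (distr (measure_pmf \<mu>) (borel \<Otimes>\<^sub>M borel) (\<lambda>y. (pt y, uhat (fst y)))) borel snd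
      = empirical N uhat" .
qed simp

text \<open>The distribution draws a sample index \<open>j\<close> uniformly and then moves \<open>uhat j\<close> to \<open>up j\<close>
  with probability \<open>\<theta>\<close> and to \<open>um j\<close> otherwise; the coupling with the index it came from has
  the \<open>\<theta>\<close>-mixture of the transport costs as its cost.\<close>

lemma two_point_mixture_in_wball:
  fixes up um :: "nat \<Rightarrow> vec" and F :: "vec \<Rightarrow> real"
  assumes N1: "1 \<le> N" and \<theta>: "0 \<le> \<theta>" "\<theta> \<le> 1"
    and in_box: "\<forall>j\<in>{1..N}. up j \<in> box_set n uL uU \<and> um j \<in> box_set n uL uU"
    and budget: "(1 / real N) * (\<Sum>j=1..N. \<theta> * transport_cost p n uhat j (up j)
       + (1 - \<theta>) * transport_cost p n uhat j (um j)) \<le> \<epsilon> ^ p"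
    and F_measurable: "F \<in> borel_measurable borel" and F_nonneg: "\<And>u. 0 \<le> F u"
  shows "\<exists>Q\<in>wball p n uL uU N uhat \<epsilon>.
     (\<integral>\<^sup>+u. ennreal (F u) \<partial>Q) = ennreal ((1 / real N) * (\<Sum>j=1..N. \<theta> * F (up j) + (1 - \<theta>) * F (um j)))"
proof -
  define \<mu> where "\<mu> = pair_pmf (pmf_of_set {1..N}) (bernoulli_pmf \<theta>)"
  define pt where "pt = (\<lambda>y::nat\<times>bool. if snd y then up (fst y) else um (fst y))"
  define Q where "Q = distr (measure_pmf \<mu>) borel pt"
  define P where "P = distr (measure_pmf \<mu>) (borel \<Otimes>\<^sub>M borel) (\<lambda>y. (pt y, uhat (fst y)))"
  have coupling: "P \<in> couplings Q (empirical N uhat)"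
    unfolding P_def Q_def \<mu>_def using N1 by (intro pmf_coupling_with_empirical) (simp_all add: map_fst_pair_pmf)
  have "AE y in measure_pmf \<mu>. pt y \<in> box_set n uL uU"
    unfolding AE_measure_pmf_iff \<mu>_def pt_def using N1 in_box by (auto simp: set_pair_pmf)
  then have Q_box: "AE u in Q. u \<in> box_set n uL uU"
    unfolding Q_def by (subst AE_distr_iff) auto
  have "wass_pow p n Q (empirical N uhat) \<le> (\<integral>\<^sup>+ x. ennreal (\<Sum>i=1..n. \<bar>fst x i - snd x i\<bar> ^ p) \<partial>P)"
    unfolding wass_pow_def by (rule INF_lower[OF coupling])
  also have "\<dots> = (\<integral>\<^sup>+ y. ennreal (transport_cost p n uhat (fst y) (pt y)) \<partial>measure_pmf \<mu>)"
    unfolding P_def by (subst nn_integral_distr) (auto simp: transport_cost_def space_pair_measure)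
  also have "\<dots> = ennreal ((1 / real N) * (\<Sum>j=1..N. \<theta> * transport_cost p n uhat j (up j)
      + (1 - \<theta>) * transport_cost p n uhat j (um j)))"
    unfolding \<mu>_def by (subst nn_integral_uniform_bernoulli[OF N1 \<theta>]) (auto simp: pt_def transport_cost_nonneg)
  also have "\<dots> \<le> ennreal (\<epsilon> ^ p)"
    using budget by (intro ennreal_leI)
  finally have "Q \<in> wball p n uL uU N uhat \<epsilon>"
    using Q_box unfolding wball_def Q_def by (auto simp: measure_pmf.prob_space_distr)
  moreover have "(\<integral>\<^sup>+u. ennreal (F u) \<partial>Q) = (\<integral>\<^sup>+y. ennreal (F (pt y)) \<partial>measure_pmf \<mu>)"
    unfolding Q_def using F_measurable by (subst nn_integral_distr) auto
  moreover have "\<dots> = ennreal ((1 / real N) * (\<Sum>j=1..N. \<theta> * F (up j) + (1 - \<theta>) * F (um j)))"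
    unfolding \<mu>_def by (subst nn_integral_uniform_bernoulli[OF N1 \<theta>]) (auto simp: pt_def F_nonneg)
  ultimately show ?thesis by auto
qed

section \<open>Strong duality over the Wasserstein ball\<close>

definition sample_mean :: "nat \<Rightarrow> (nat \<Rightarrow> real) \<Rightarrow> real" where
  "sample_mean N f = (1 / real N) * (\<Sum>j=1..N. f j)"

lemma sample_mean_add: "sample_mean N (\<lambda>j. f j + g j) = sample_mean N f + sample_mean N g"
  unfolding sample_mean_def by (simp add: sum.distrib algebra_simps)

lemma sample_mean_diff: "sample_mean N (\<lambda>j. f j - g j) = sample_mean N f - sample_mean N g"
  unfolding sample_mean_def by (simp add: sum_subtractf algebra_simps)

lemma sample_mean_cmult: "sample_mean N (\<lambda>j. a * f j) = a * sample_mean N f"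
  unfolding sample_mean_def by (simp add: sum_distrib_left algebra_simps)

lemma sample_mean_mono: "(\<And>j. j \<in> {1..N} \<Longrightarrow> f j \<le> g j) \<Longrightarrow> sample_mean N f \<le> sample_mean N g"
  unfolding sample_mean_def by (intro mult_left_mono sum_mono) auto

lemma sample_mean_const: "1 \<le> N \<Longrightarrow> sample_mean N (\<lambda>j. a) = a"
  unfolding sample_mean_def by simp

lemma sample_mean_cong: "(\<And>j. j \<in> {1..N} \<Longrightarrow> f j = g j) \<Longrightarrow> sample_mean N f = sample_mean N g"
  unfolding sample_mean_def using sum.cong[of "{1..N}" "{1..N}" f g] by simp

lemma sample_mean_mixture:
  "sample_mean N (\<lambda>j. \<theta> * f j + (1 - \<theta>) * g j) = \<theta> * sample_mean N f + (1 - \<theta>) * sample_mean N g"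
  by (simp add: sample_mean_add sample_mean_cmult)

lemma convex_combination_hits:
  fixes a b e :: real
  assumes "a \<le> e" "e \<le> b"
  obtains \<theta> where "0 \<le> \<theta>" "\<theta> \<le> 1" "\<theta> * a + (1 - \<theta>) * b = e"
proof (cases "a = b")
  case True
  then show ?thesis using that[of 1] assms by simp
next
  case False
  then have "a < b" using assms by simp
  define \<theta> where "\<theta> = (b - e) / (b - a)"
  have "\<theta> * (b - a) = b - e" using \<open>a < b\<close> by (simp add: \<theta>_def)
  then have "\<theta> * a + (1 - \<theta>) * b = e" by (simp add: algebra_simps)
  moreover have "0 \<le> \<theta>" "\<theta> \<le> 1" using assms \<open>a < b\<close> by (simp_all add: \<theta>_def)
  ultimately show ?thesis using that by blast
qed

text \<open>The suprema of the penalised cost are assumed to be attained; for the recourse value this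
  follows from the exactness of the LP and SOCP representations.\<close>

locale wasserstein_dual =
  fixes F :: "vec \<Rightarrow> real" and p n N :: nat and uL uU :: vec and uhat :: "nat \<Rightarrow> vec" and \<epsilon> K :: real
  assumes N1: "1 \<le> N" and p1: "1 \<le> p" and e0: "0 < \<epsilon>"
    and F_measurable: "F \<in> borel_measurable borel" and F_nonneg: "\<And>u. 0 \<le> F u"
    and samples_in_box: "\<And>j. j \<in> {1..N} \<Longrightarrow> uhat j \<in> box_set n uL uU"
    and cost_le_K: "\<And>j u. j \<in> {1..N} \<Longrightarrow> u \<in> box_set n uL uU \<Longrightarrow> transport_cost p n uhat j u \<le> K"
    and penalized_max_exists: "\<And>\<rho> j. 0 \<le> \<rho> \<Longrightarrow> j \<in> {1..N} \<Longrightarrow> \<exists>u\<in>box_set n uL uU.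
       \<forall>v\<in>box_set n uL uU. F v - \<rho> * transport_cost p n uhat j v \<le> F u - \<rho> * transport_cost p n uhat j u"
begin

definition penalized_max :: "nat \<Rightarrow> real \<Rightarrow> real" where
  "penalized_max j \<rho> = Sup ((\<lambda>u. F u - \<rho> * transport_cost p n uhat j u) ` box_set n uL uU)"

definition dual_obj :: "real \<Rightarrow> real" where
  "dual_obj \<rho> = \<epsilon> ^ p * \<rho> + sample_mean N (\<lambda>j. penalized_max j \<rho>)"

lemma penalized_max_attained:
  assumes "0 \<le> \<rho>" "j \<in> {1..N}"
  obtains u where "u \<in> box_set n uL uU" "penalized_max j \<rho> = F u - \<rho> * transport_cost p n uhat j u"
proof -
  obtain u where u: "u \<in> box_set n uL uU"
    and max: "\<forall>v\<in>box_set n uL uU. F v - \<rho> * transport_cost p n uhat j v \<le> F u - \<rho> * transport_cost p n uhat j u"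
    using penalized_max_exists[OF assms] by blast
  have "penalized_max j \<rho> = F u - \<rho> * transport_cost p n uhat j u"
    unfolding penalized_max_def by (rule cSup_eq_maximum) (use u max in auto)
  then show ?thesis using u that by blast
qed

lemma penalized_max_ge:
  assumes "0 \<le> \<rho>" "j \<in> {1..N}" "u \<in> box_set n uL uU"
  shows "F u - \<rho> * transport_cost p n uhat j u \<le> penalized_max j \<rho>"
proof -
  obtain w where "\<forall>v\<in>box_set n uL uU. F v - \<rho> * transport_cost p n uhat j v \<le> F w - \<rho> * transport_cost p n uhat j w"
    using penalized_max_exists[OF assms(1,2)] by blast
  then have "bdd_above ((\<lambda>u. F u - \<rho> * transport_cost p n uhat j u) ` box_set n uL uU)"
    by (auto simp: bdd_above_def)
  then show ?thesis unfolding penalized_max_def using assms(3) by (intro cSup_upper) auto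
qed

lemma penalized_max_le:
  assumes "0 \<le> \<rho>" "j \<in> {1..N}"
    and "\<And>u. u \<in> box_set n uL uU \<Longrightarrow> F u - \<rho> * transport_cost p n uhat j u \<le> b"
  shows "penalized_max j \<rho> \<le> b"
  using penalized_max_attained[OF assms(1,2)] assms(3) by metis

lemma penalized_max_nonneg: "0 \<le> \<rho> \<Longrightarrow> j \<in> {1..N} \<Longrightarrow> 0 \<le> penalized_max j \<rho>"
  using penalized_max_ge[OF _ _ samples_in_box] F_nonneg transport_cost_self[OF p1]
  by (metis diff_zero mult_zero_right order.trans)

lemma K_nonneg: "0 \<le> K"
  using cost_le_K[of 1 "uhat 1"] samples_in_box[of 1] N1 transport_cost_nonneg[of p n uhat 1 "uhat 1"] by auto

lemma penalized_max_lipschitz: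
  assumes "0 \<le> \<rho>" "0 \<le> \<rho>'" "j \<in> {1..N}"
  shows "penalized_max j \<rho> - \<bar>\<rho>' - \<rho>\<bar> * K \<le> penalized_max j \<rho>'"
proof -
  obtain u where u: "u \<in> box_set n uL uU" and eq: "penalized_max j \<rho> = F u - \<rho> * transport_cost p n uhat j u"
    using penalized_max_attained[OF assms(1,3)] .
  have "(\<rho>' - \<rho>) * transport_cost p n uhat j u \<le> \<bar>\<rho>' - \<rho>\<bar> * transport_cost p n uhat j u"
    using transport_cost_nonneg by (intro mult_right_mono) auto
  also have "\<dots> \<le> \<bar>\<rho>' - \<rho>\<bar> * K"
    using cost_le_K[OF assms(3) u] by (intro mult_left_mono) auto
  finally show ?thesis
    using penalized_max_ge[OF assms(2,3) u] unfolding eq by (simp add: algebra_simps)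
qed

lemma penalized_max_antimono:
  assumes "0 \<le> \<rho>" "\<rho> \<le> \<rho>'" "j \<in> {1..N}"
  shows "penalized_max j \<rho>' \<le> penalized_max j \<rho>"
proof (rule penalized_max_le)
  fix u assume u: "u \<in> box_set n uL uU"
  have "\<rho> * transport_cost p n uhat j u \<le> \<rho>' * transport_cost p n uhat j u"
    using assms(2) transport_cost_nonneg by (intro mult_right_mono) auto
  then show "F u - \<rho>' * transport_cost p n uhat j u \<le> penalized_max j \<rho>"
    using penalized_max_ge[OF assms(1,3) u] by simp
qed (use assms in auto)

lemma dual_obj_lipschitz: "(\<epsilon> ^ p + K)-lipschitz_on {0..} dual_obj"
proof (rule lipschitz_onI)
  fix \<rho> \<rho>' :: real assume "\<rho> \<in> {0..}" "\<rho>' \<in> {0..}"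
  then have r: "0 \<le> \<rho>" "0 \<le> \<rho>'" by auto
  have "sample_mean N (\<lambda>j. penalized_max j \<rho>) - \<bar>\<rho>' - \<rho>\<bar> * K \<le> sample_mean N (\<lambda>j. penalized_max j \<rho>')"
    and "sample_mean N (\<lambda>j. penalized_max j \<rho>') - \<bar>\<rho>' - \<rho>\<bar> * K \<le> sample_mean N (\<lambda>j. penalized_max j \<rho>)"
    using sample_mean_mono[of N "\<lambda>j. penalized_max j \<rho> - \<bar>\<rho>' - \<rho>\<bar> * K" "\<lambda>j. penalized_max j \<rho>'"]
      sample_mean_mono[of N "\<lambda>j. penalized_max j \<rho>' - \<bar>\<rho> - \<rho>'\<bar> * K" "\<lambda>j. penalized_max j \<rho>"]
      penalized_max_lipschitz[OF r] penalized_max_lipschitz[OF r(2,1)]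
    by (simp_all add: sample_mean_diff sample_mean_const[OF N1] abs_minus_commute)
  moreover have "\<epsilon> ^ p * (\<rho> - \<rho>') \<le> \<epsilon> ^ p * \<bar>\<rho> - \<rho>'\<bar>" "\<epsilon> ^ p * (\<rho>' - \<rho>) \<le> \<epsilon> ^ p * \<bar>\<rho> - \<rho>'\<bar>"
    using e0 by (intro mult_left_mono; simp)+
  ultimately show "dist (dual_obj \<rho>) (dual_obj \<rho>') \<le> (\<epsilon> ^ p + K) * dist \<rho> \<rho>'"
    unfolding dual_obj_def dist_real_def abs_le_iff by (simp add: abs_minus_commute algebra_simps)
qed (use e0 K_nonneg in simp)

lemma dual_obj_ge: "0 \<le> \<rho> \<Longrightarrow> \<epsilon> ^ p * \<rho> \<le> dual_obj \<rho>"
  using sample_mean_mono[of N "\<lambda>j. 0" "\<lambda>j. penalized_max j \<rho>"] penalized_max_nonneg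
  unfolding dual_obj_def by (simp add: sample_mean_const[OF N1])

lemma dual_obj_has_min: "\<exists>\<rho>\<^sub>0\<ge>0. \<forall>\<rho>\<ge>0. dual_obj \<rho>\<^sub>0 \<le> dual_obj \<rho>"
proof -
  define R where "R = dual_obj 0 / \<epsilon> ^ p"
  have ep: "0 < \<epsilon> ^ p" using e0 by simp
  have R0: "0 \<le> R" unfolding R_def using dual_obj_ge[of 0] ep by simp
  have "continuous_on {0..R} dual_obj"
    using lipschitz_on_continuous_on[OF dual_obj_lipschitz] by (rule continuous_on_subset) auto
  then obtain \<rho>\<^sub>0 where \<rho>\<^sub>0: "\<rho>\<^sub>0 \<in> {0..R}" and min: "\<forall>\<rho>\<in>{0..R}. dual_obj \<rho>\<^sub>0 \<le> dual_obj \<rho>"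
    using continuous_attains_inf[of "{0..R}" dual_obj] R0 by auto
  have "dual_obj \<rho>\<^sub>0 \<le> dual_obj \<rho>" if "0 \<le> \<rho>" for \<rho>
  proof (cases "\<rho> \<le> R")
    case False
    have "dual_obj \<rho>\<^sub>0 \<le> dual_obj 0" using min R0 by simp
    also have "\<dots> = \<epsilon> ^ p * R" using e0 by (simp add: R_def)
    also have "\<dots> \<le> \<epsilon> ^ p * \<rho>" using False ep by simp
    also have "\<dots> \<le> dual_obj \<rho>" by (rule dual_obj_ge[OF that])
    finally show ?thesis .
  qed (use min that in auto)
  then show ?thesis using \<rho>\<^sub>0 by auto
qed

lemma dual_obj_le_of_bound:
  assumes "0 \<le> \<rho>"
    and "\<And>j u. j \<in> {1..N} \<Longrightarrow> u \<in> box_set n uL uU \<Longrightarrow> F u - \<rho> * transport_cost p n uhat j u \<le> g j"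
  shows "dual_obj \<rho> \<le> \<epsilon> ^ p * \<rho> + sample_mean N g"
proof -
  have "sample_mean N (\<lambda>j. penalized_max j \<rho>) \<le> sample_mean N g"
    using assms by (intro sample_mean_mono penalized_max_le) auto
  then show ?thesis unfolding dual_obj_def by simp
qed

lemma dual_obj_ge_of_attained:
  assumes "0 \<le> \<rho>"
    and "\<And>j. j \<in> {1..N} \<Longrightarrow> \<exists>u\<in>box_set n uL uU. g j \<le> F u - \<rho> * transport_cost p n uhat j u"
  shows "\<epsilon> ^ p * \<rho> + sample_mean N g \<le> dual_obj \<rho>"
proof -
  have "g j \<le> penalized_max j \<rho>" if "j \<in> {1..N}" for j
    using assms(2)[OF that] penalized_max_ge[OF assms(1) that] by (blast intro: order.trans)
  then have "sample_mean N g \<le> sample_mean N (\<lambda>j. penalized_max j \<rho>)"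
    by (intro sample_mean_mono) auto
  then show ?thesis unfolding dual_obj_def by simp
qed

lemma maximizer_family:
  assumes "0 \<le> \<rho>"
  obtains u where "\<And>j. j \<in> {1..N} \<Longrightarrow> u j \<in> box_set n uL uU"
    and "\<And>j. j \<in> {1..N} \<Longrightarrow> penalized_max j \<rho> = F (u j) - \<rho> * transport_cost p n uhat j (u j)"
proof -
  have "\<forall>j\<in>{1..N}. \<exists>v. v \<in> box_set n uL uU \<and> penalized_max j \<rho> = F v - \<rho> * transport_cost p n uhat j v"
    using penalized_max_attained[OF assms] by metis
  then obtain u where "\<forall>j\<in>{1..N}. u j \<in> box_set n uL uU \<and>
      penalized_max j \<rho> = F (u j) - \<rho> * transport_cost p n uhat j (u j)"
    by metis
  then show ?thesis using that by blast
qed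

lemma sample_mean_maximizers:
  assumes "\<And>j. j \<in> {1..N} \<Longrightarrow> penalized_max j \<rho> = F (u j) - \<rho> * transport_cost p n uhat j (u j)"
  shows "sample_mean N (\<lambda>j. F (u j))
    = sample_mean N (\<lambda>j. penalized_max j \<rho>) + \<rho> * sample_mean N (\<lambda>j. transport_cost p n uhat j (u j))"
proof -
  have "sample_mean N (\<lambda>j. F (u j))
      = sample_mean N (\<lambda>j. penalized_max j \<rho> + \<rho> * transport_cost p n uhat j (u j))"
    using assms by (intro sample_mean_cong) simp
  then show ?thesis by (simp add: sample_mean_add sample_mean_cmult)
qed

lemma maximizers_right_of_min:
  assumes min: "\<forall>\<rho>\<ge>0. dual_obj \<rho>\<^sub>0 \<le> dual_obj \<rho>" and \<rho>\<^sub>0: "0 \<le> \<rho>\<^sub>0" and \<delta>: "0 < \<delta>"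
    and u: "\<And>j. j \<in> {1..N} \<Longrightarrow> u j \<in> box_set n uL uU"
      "\<And>j. j \<in> {1..N} \<Longrightarrow> penalized_max j (\<rho>\<^sub>0 + \<delta>) = F (u j) - (\<rho>\<^sub>0 + \<delta>) * transport_cost p n uhat j (u j)"
  defines "A \<equiv> sample_mean N (\<lambda>j. transport_cost p n uhat j (u j))"
  shows "A \<le> \<epsilon> ^ p"
    and "sample_mean N (\<lambda>j. penalized_max j \<rho>\<^sub>0) + \<rho>\<^sub>0 * A - \<delta> * K \<le> sample_mean N (\<lambda>j. F (u j))"
proof -
  have "sample_mean N (\<lambda>j. penalized_max j (\<rho>\<^sub>0 + \<delta>) + \<delta> * transport_cost p n uhat j (u j))
      \<le> sample_mean N (\<lambda>j. penalized_max j \<rho>\<^sub>0)"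
  proof (rule sample_mean_mono)
    fix j assume j: "j \<in> {1..N}"
    show "penalized_max j (\<rho>\<^sub>0 + \<delta>) + \<delta> * transport_cost p n uhat j (u j) \<le> penalized_max j \<rho>\<^sub>0"
      using penalized_max_ge[OF \<rho>\<^sub>0 j u(1)[OF j]] u(2)[OF j] by (simp add: algebra_simps)
  qed
  moreover have "dual_obj \<rho>\<^sub>0 \<le> dual_obj (\<rho>\<^sub>0 + \<delta>)" using min \<rho>\<^sub>0 \<delta> by simp
  ultimately have "\<delta> * A \<le> \<delta> * \<epsilon> ^ p"
    unfolding dual_obj_def A_def by (simp add: sample_mean_add sample_mean_cmult algebra_simps)
  then show "A \<le> \<epsilon> ^ p" using \<delta> by simp
  have "sample_mean N (\<lambda>j. penalized_max j \<rho>\<^sub>0) - \<delta> * K \<le> sample_mean N (\<lambda>j. penalized_max j (\<rho>\<^sub>0 + \<delta>))"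
    using sample_mean_mono[of N "\<lambda>j. penalized_max j \<rho>\<^sub>0 - \<delta> * K"] penalized_max_lipschitz[of \<rho>\<^sub>0 "\<rho>\<^sub>0 + \<delta>"] \<rho>\<^sub>0 \<delta>
    by (simp add: sample_mean_diff sample_mean_const[OF N1])
  moreover have "0 \<le> \<delta> * A"
    unfolding A_def using \<delta> sample_mean_mono[of N "\<lambda>j. 0"] transport_cost_nonneg
    by (simp add: sample_mean_const[OF N1])
  moreover have "sample_mean N (\<lambda>j. F (u j)) = sample_mean N (\<lambda>j. penalized_max j (\<rho>\<^sub>0 + \<delta>)) + \<rho>\<^sub>0 * A + \<delta> * A"
    using sample_mean_maximizers[OF u(2)] unfolding A_def by (simp add: distrib_right)
  ultimately show "sample_mean N (\<lambda>j. penalized_max j \<rho>\<^sub>0) + \<rho>\<^sub>0 * A - \<delta> * K \<le> sample_mean N (\<lambda>j. F (u j))"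
    by linarith
qed

lemma maximizers_left_of_min:
  assumes min: "\<forall>\<rho>\<ge>0. dual_obj \<rho>\<^sub>0 \<le> dual_obj \<rho>" and \<delta>: "0 < \<delta>" "\<delta> \<le> \<rho>\<^sub>0"
    and u: "\<And>j. j \<in> {1..N} \<Longrightarrow> u j \<in> box_set n uL uU"
      "\<And>j. j \<in> {1..N} \<Longrightarrow> penalized_max j (\<rho>\<^sub>0 - \<delta>) = F (u j) - (\<rho>\<^sub>0 - \<delta>) * transport_cost p n uhat j (u j)"
  defines "A \<equiv> sample_mean N (\<lambda>j. transport_cost p n uhat j (u j))"
  shows "\<epsilon> ^ p \<le> A"
    and "sample_mean N (\<lambda>j. penalized_max j \<rho>\<^sub>0) + \<rho>\<^sub>0 * A - \<delta> * K \<le> sample_mean N (\<lambda>j. F (u j))"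
proof -
  have \<rho>\<^sub>0: "0 \<le> \<rho>\<^sub>0" using \<delta> by simp
  have "sample_mean N (\<lambda>j. penalized_max j (\<rho>\<^sub>0 - \<delta>) - \<delta> * transport_cost p n uhat j (u j))
      \<le> sample_mean N (\<lambda>j. penalized_max j \<rho>\<^sub>0)"
  proof (rule sample_mean_mono)
    fix j assume j: "j \<in> {1..N}"
    show "penalized_max j (\<rho>\<^sub>0 - \<delta>) - \<delta> * transport_cost p n uhat j (u j) \<le> penalized_max j \<rho>\<^sub>0"
      using penalized_max_ge[OF \<rho>\<^sub>0 j u(1)[OF j]] u(2)[OF j] by (simp add: algebra_simps)
  qed
  moreover have "dual_obj \<rho>\<^sub>0 \<le> dual_obj (\<rho>\<^sub>0 - \<delta>)" using min \<delta> by simp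
  ultimately have "\<delta> * \<epsilon> ^ p \<le> \<delta> * A"
    unfolding dual_obj_def A_def by (simp add: sample_mean_diff sample_mean_cmult algebra_simps)
  then show "\<epsilon> ^ p \<le> A" using \<delta> by simp
  have "sample_mean N (\<lambda>j. penalized_max j \<rho>\<^sub>0) \<le> sample_mean N (\<lambda>j. penalized_max j (\<rho>\<^sub>0 - \<delta>))"
    using penalized_max_antimono[of "\<rho>\<^sub>0 - \<delta>" \<rho>\<^sub>0] \<delta> by (intro sample_mean_mono) auto
  moreover have "\<delta> * A \<le> \<delta> * K"
    unfolding A_def using \<delta> sample_mean_mono[of N _ "\<lambda>j. K"] cost_le_K u(1)
    by (simp add: sample_mean_const[OF N1])
  moreover have "sample_mean N (\<lambda>j. F (u j)) = sample_mean N (\<lambda>j. penalized_max j (\<rho>\<^sub>0 - \<delta>)) + \<rho>\<^sub>0 * A - \<delta> * A"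
    using sample_mean_maximizers[OF u(2)] unfolding A_def by (simp add: left_diff_distrib)
  ultimately show "sample_mean N (\<lambda>j. penalized_max j \<rho>\<^sub>0) + \<rho>\<^sub>0 * A - \<delta> * K \<le> sample_mean N (\<lambda>j. F (u j))"
    by linarith
qed

lemma near_optimal_distribution:
  assumes min: "\<forall>\<rho>\<ge>0. dual_obj \<rho>\<^sub>0 \<le> dual_obj \<rho>" and \<rho>\<^sub>0: "0 \<le> \<rho>\<^sub>0"
    and \<delta>: "0 < \<delta>" "0 < \<rho>\<^sub>0 \<Longrightarrow> \<delta> \<le> \<rho>\<^sub>0"
  shows "\<exists>Q\<in>wball p n uL uU N uhat \<epsilon>. ennreal (dual_obj \<rho>\<^sub>0 - \<delta> * K) \<le> (\<integral>\<^sup>+u. ennreal (F u) \<partial>Q)"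
proof -
  define M where "M = sample_mean N (\<lambda>j. penalized_max j \<rho>\<^sub>0)"
  define cost where "cost = (\<lambda>v. sample_mean N (\<lambda>j. transport_cost p n uhat j (v j)))"
  define gain where "gain = (\<lambda>v. sample_mean N (\<lambda>j. F (v j)))"
  obtain u\<^sub>1 where u\<^sub>1: "\<And>j. j \<in> {1..N} \<Longrightarrow> u\<^sub>1 j \<in> box_set n uL uU"
    "\<And>j. j \<in> {1..N} \<Longrightarrow> penalized_max j (\<rho>\<^sub>0 + \<delta>) = F (u\<^sub>1 j) - (\<rho>\<^sub>0 + \<delta>) * transport_cost p n uhat j (u\<^sub>1 j)"
    using maximizer_family[of "\<rho>\<^sub>0 + \<delta>"] \<rho>\<^sub>0 \<delta> by auto
  have c\<^sub>1: "cost u\<^sub>1 \<le> \<epsilon> ^ p" and g\<^sub>1: "M + \<rho>\<^sub>0 * cost u\<^sub>1 - \<delta> * K \<le> gain u\<^sub>1"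
    using maximizers_right_of_min[OF min \<rho>\<^sub>0 \<delta>(1) u\<^sub>1] unfolding M_def cost_def gain_def by auto
  obtain u\<^sub>2 \<theta> where u\<^sub>2: "\<And>j. j \<in> {1..N} \<Longrightarrow> u\<^sub>2 j \<in> box_set n uL uU"
    and g\<^sub>2: "M + \<rho>\<^sub>0 * cost u\<^sub>2 - \<delta> * K \<le> gain u\<^sub>2"
    and \<theta>: "0 \<le> \<theta>" "\<theta> \<le> 1" "\<theta> * cost u\<^sub>1 + (1 - \<theta>) * cost u\<^sub>2 \<le> \<epsilon> ^ p"
      "\<rho>\<^sub>0 * (\<theta> * cost u\<^sub>1 + (1 - \<theta>) * cost u\<^sub>2) = \<rho>\<^sub>0 * \<epsilon> ^ p"
  proof (cases "\<rho>\<^sub>0 = 0")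
    case True
    then show ?thesis using that[of u\<^sub>1 1] u\<^sub>1 g\<^sub>1 c\<^sub>1 by simp
  next
    case False
    then have \<delta>\<rho>: "\<delta> \<le> \<rho>\<^sub>0" using \<rho>\<^sub>0 \<delta> by simp
    obtain u\<^sub>2 where u\<^sub>2: "\<And>j. j \<in> {1..N} \<Longrightarrow> u\<^sub>2 j \<in> box_set n uL uU"
      "\<And>j. j \<in> {1..N} \<Longrightarrow> penalized_max j (\<rho>\<^sub>0 - \<delta>) = F (u\<^sub>2 j) - (\<rho>\<^sub>0 - \<delta>) * transport_cost p n uhat j (u\<^sub>2 j)"
      using maximizer_family[of "\<rho>\<^sub>0 - \<delta>"] \<delta>\<rho> by auto
    have c\<^sub>2: "\<epsilon> ^ p \<le> cost u\<^sub>2" and g\<^sub>2: "M + \<rho>\<^sub>0 * cost u\<^sub>2 - \<delta> * K \<le> gain u\<^sub>2"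
      using maximizers_left_of_min[OF min \<delta>(1) \<delta>\<rho> u\<^sub>2] unfolding M_def cost_def gain_def by auto
    obtain \<theta> where "0 \<le> \<theta>" "\<theta> \<le> 1" "\<theta> * cost u\<^sub>1 + (1 - \<theta>) * cost u\<^sub>2 = \<epsilon> ^ p"
      using convex_combination_hits[OF c\<^sub>1 c\<^sub>2] .
    then show ?thesis using that[of u\<^sub>2 \<theta>] u\<^sub>2 g\<^sub>2 by simp
  qed
  obtain Q where Q: "Q \<in> wball p n uL uU N uhat \<epsilon>"
    and EQ: "(\<integral>\<^sup>+u. ennreal (F u) \<partial>Q) = ennreal (\<theta> * gain u\<^sub>1 + (1 - \<theta>) * gain u\<^sub>2)"
    using two_point_mixture_in_wball[OF N1 \<theta>(1,2), of u\<^sub>1 n uL uU u\<^sub>2 p uhat \<epsilon> F] u\<^sub>1(1) u\<^sub>2 \<theta>(3)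
      F_measurable F_nonneg
    unfolding sample_mean_def[symmetric] sample_mean_mixture cost_def gain_def by blast
  have "\<theta> * (M + \<rho>\<^sub>0 * cost u\<^sub>1 - \<delta> * K) + (1 - \<theta>) * (M + \<rho>\<^sub>0 * cost u\<^sub>2 - \<delta> * K)
      \<le> \<theta> * gain u\<^sub>1 + (1 - \<theta>) * gain u\<^sub>2"
    using g\<^sub>1 g\<^sub>2 \<theta> by (intro add_mono mult_left_mono) auto
  moreover have "\<theta> * (M + \<rho>\<^sub>0 * cost u\<^sub>1 - \<delta> * K) + (1 - \<theta>) * (M + \<rho>\<^sub>0 * cost u\<^sub>2 - \<delta> * K)
      = dual_obj \<rho>\<^sub>0 - \<delta> * K"
    using \<theta>(4) unfolding dual_obj_def M_def by (simp add: algebra_simps)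
  ultimately have "ennreal (dual_obj \<rho>\<^sub>0 - \<delta> * K) \<le> (\<integral>\<^sup>+u. ennreal (F u) \<partial>Q)"
    unfolding EQ by (intro ennreal_leI) linarith
  then show ?thesis using Q by blast
qed

lemma worst_case_le_dual_obj:
  assumes \<rho>: "0 \<le> \<rho>"
  shows "(SUP Q\<in>wball p n uL uU N uhat \<epsilon>. enn2ereal (\<integral>\<^sup>+u. ennreal (F u) \<partial>Q)) \<le> ereal (dual_obj \<rho>)"
proof (rule SUP_least)
  fix Q assume Q: "Q \<in> wball p n uL uU N uhat \<epsilon>"
  have "(\<integral>\<^sup>+u. ennreal (F u) \<partial>Q) \<le> ennreal (dual_obj \<rho>)"
    unfolding dual_obj_def sample_mean_def
    using penalized_max_ge[OF \<rho>] samples_in_box F_nonneg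
    by (intro nn_integral_le_dual_bound[OF N1 p1 F_measurable _ Q e0 \<rho>]) auto
  then have "enn2ereal (\<integral>\<^sup>+u. ennreal (F u) \<partial>Q) \<le> enn2ereal (ennreal (dual_obj \<rho>))"
    by (simp only: less_eq_ennreal.rep_eq[symmetric])
  moreover have "0 \<le> dual_obj \<rho>"
    using dual_obj_ge[OF \<rho>] \<rho> e0 by (meson order.trans zero_le_mult_iff zero_le_power less_imp_le)
  ultimately show "enn2ereal (\<integral>\<^sup>+u. ennreal (F u) \<partial>Q) \<le> ereal (dual_obj \<rho>)"
    by simp
qed

lemma dual_min_le_worst_case:
  assumes min: "\<forall>\<rho>\<ge>0. dual_obj \<rho>\<^sub>0 \<le> dual_obj \<rho>" and \<rho>\<^sub>0: "0 \<le> \<rho>\<^sub>0"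
  shows "ereal (dual_obj \<rho>\<^sub>0) \<le> (SUP Q\<in>wball p n uL uU N uhat \<epsilon>. enn2ereal (\<integral>\<^sup>+u. ennreal (F u) \<partial>Q))"
proof (rule ereal_le_epsilon2)
  fix e :: real assume e: "0 < e"
  define \<delta> where "\<delta> = min (if 0 < \<rho>\<^sub>0 then \<rho>\<^sub>0 else 1) (e / (K + 1))"
  have \<delta>: "0 < \<delta>" "0 < \<rho>\<^sub>0 \<Longrightarrow> \<delta> \<le> \<rho>\<^sub>0" unfolding \<delta>_def using e K_nonneg by auto
  have "\<delta> * K \<le> e / (K + 1) * K" unfolding \<delta>_def using K_nonneg by (intro mult_right_mono) auto
  also have "\<dots> \<le> e" using e K_nonneg by (simp add: field_simps)
  finally have \<delta>K: "\<delta> * K \<le> e" .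
  obtain Q where Q: "Q \<in> wball p n uL uU N uhat \<epsilon>"
    and le: "ennreal (dual_obj \<rho>\<^sub>0 - \<delta> * K) \<le> (\<integral>\<^sup>+u. ennreal (F u) \<partial>Q)"
    using near_optimal_distribution[OF min \<rho>\<^sub>0 \<delta>] by blast
  have "ereal (dual_obj \<rho>\<^sub>0 - \<delta> * K) \<le> enn2ereal (ennreal (dual_obj \<rho>\<^sub>0 - \<delta> * K))"
    by (cases "0 \<le> dual_obj \<rho>\<^sub>0 - \<delta> * K") (auto simp: ennreal_neg zero_ennreal.rep_eq)
  also have "\<dots> \<le> enn2ereal (\<integral>\<^sup>+u. ennreal (F u) \<partial>Q)"
    using le by (simp only: less_eq_ennreal.rep_eq[symmetric])
  also have "\<dots> \<le> (SUP Q\<in>wball p n uL uU N uhat \<epsilon>. enn2ereal (\<integral>\<^sup>+u. ennreal (F u) \<partial>Q))"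
    using Q by (rule SUP_upper)
  finally show "ereal (dual_obj \<rho>\<^sub>0) \<le> (SUP Q\<in>wball p n uL uU N uhat \<epsilon>. enn2ereal (\<integral>\<^sup>+u. ennreal (F u) \<partial>Q)) + ereal e"
    using \<delta>K by (cases "SUP Q\<in>wball p n uL uU N uhat \<epsilon>. enn2ereal (\<integral>\<^sup>+u. ennreal (F u) \<partial>Q)") auto
qed

theorem worst_case_eq_dual_min:
  obtains \<rho>\<^sub>0 where "0 \<le> \<rho>\<^sub>0" "\<forall>\<rho>\<ge>0. dual_obj \<rho>\<^sub>0 \<le> dual_obj \<rho>"
    and "(SUP Q\<in>wball p n uL uU N uhat \<epsilon>. enn2ereal (\<integral>\<^sup>+u. ennreal (F u) \<partial>Q)) = ereal (dual_obj \<rho>\<^sub>0)"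
proof -
  obtain \<rho>\<^sub>0 where \<rho>\<^sub>0: "0 \<le> \<rho>\<^sub>0" and min: "\<forall>\<rho>\<ge>0. dual_obj \<rho>\<^sub>0 \<le> dual_obj \<rho>"
    using dual_obj_has_min by blast
  then show ?thesis
    using that worst_case_le_dual_obj[OF \<rho>\<^sub>0] dual_min_le_worst_case[OF min \<rho>\<^sub>0] by (metis antisym)
qed

end

section \<open>The reformulations\<close>

lemma INF_eq_INF_of_witnesses:
  fixes W :: "'s \<Rightarrow> ereal" and sched :: "'x \<Rightarrow> 's" and obj :: "'x \<Rightarrow> real"
  assumes sound: "\<And>x. x \<in> X \<Longrightarrow> sched x \<in> S \<and> W (sched x) \<le> ereal (obj x)"
    and exact: "\<And>s. s \<in> S \<Longrightarrow> \<exists>x\<in>X. sched x = s \<and> W s = ereal (obj x)"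
  shows "(INF s\<in>S. W s) = (INF x\<in>X. ereal (obj x))"
    and "{s\<in>S. W s = (INF s\<in>S. W s)} = {s. \<exists>x\<in>X. sched x = s \<and> ereal (obj x) = (INF x\<in>X. ereal (obj x))}"
proof -
  show eq: "(INF s\<in>S. W s) = (INF x\<in>X. ereal (obj x))"
  proof (rule antisym)
    show "(INF s\<in>S. W s) \<le> (INF x\<in>X. ereal (obj x))"
    proof (rule INF_greatest)
      fix x assume "x \<in> X"
      then show "(INF s\<in>S. W s) \<le> ereal (obj x)"
        using sound[of x] INF_lower[of "sched x" S W] by (blast intro: order.trans)
    qed
    show "(INF x\<in>X. ereal (obj x)) \<le> (INF s\<in>S. W s)"
    proof (rule INF_greatest)
      fix s assume "s \<in> S"
      then obtain x where "x \<in> X" "W s = ereal (obj x)" using exact by blast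
      then show "(INF x\<in>X. ereal (obj x)) \<le> W s" by (metis INF_lower)
    qed
  qed
  show "{s\<in>S. W s = (INF s\<in>S. W s)} = {s. \<exists>x\<in>X. sched x = s \<and> ereal (obj x) = (INF x\<in>X. ereal (obj x))}"
  proof (intro set_eqI iffI)
    fix s assume "s \<in> {s\<in>S. W s = (INF s\<in>S. W s)}"
    then have "s \<in> S" "W s = (INF x\<in>X. ereal (obj x))" using eq by auto
    then show "s \<in> {s. \<exists>x\<in>X. sched x = s \<and> ereal (obj x) = (INF x\<in>X. ereal (obj x))}"
      using exact[of s] by auto
  next
    fix s assume "s \<in> {s. \<exists>x\<in>X. sched x = s \<and> ereal (obj x) = (INF x\<in>X. ereal (obj x))}"
    then obtain x where x: "x \<in> X" "sched x = s" "ereal (obj x) = (INF x\<in>X. ereal (obj x))" by auto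
    then have "s \<in> S" "W s \<le> (INF s\<in>S. W s)" using sound[OF x(1)] eq by auto
    then show "s \<in> {s\<in>S. W s = (INF s\<in>S. W s)}" by (auto intro: antisym INF_lower)
  qed
qed

lemma wasserstein_dual_fval:
  assumes c0: "\<forall>i\<in>{1..n}. 0 \<le> c i" and d0: "\<forall>i\<in>{1..n}. 0 \<le> d i" and C0: "0 \<le> C"
    and tel: "\<forall>i\<in>{1..n-1}. d (i+1) - d i \<le> c (i+1)"
    and "1 \<le> N" "1 \<le> p" and uh: "\<forall>j\<in>{1..N}. uhat j \<in> box_set n uL uU" and "0 < \<epsilon>"
    and "\<And>\<rho> j. 0 \<le> \<rho> \<Longrightarrow> j \<in> {1..N} \<Longrightarrow> \<exists>u\<in>box_set n uL uU. \<forall>v\<in>box_set n uL uU.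
       fval n c d C s v - \<rho> * transport_cost p n uhat j v \<le> fval n c d C s u - \<rho> * transport_cost p n uhat j u"
  shows "wasserstein_dual (fval n c d C s) p n N uL uU uhat \<epsilon> (\<Sum>i=1..n. (uU i - uL i) ^ p)"
proof
  show "fval n c d C s \<in> borel_measurable borel" by (rule fval_measurable[OF c0 d0 C0 tel])
  show "0 \<le> fval n c d C s u" for u by (rule fval_nonneg[OF c0 d0 C0])
  show "transport_cost p n uhat j u \<le> (\<Sum>i=1..n. (uU i - uL i) ^ p)"
    if "j \<in> {1..N}" "u \<in> box_set n uL uU" for j u
    using transport_cost_le_diameter[OF that(2)] uh that(1) by blast
qed (use assms in auto)

lemma worst_exp_certified:
  fixes X :: "'x set" and sched :: "'x \<Rightarrow> vec" and mult :: "'x \<Rightarrow> real" and epi :: "'x \<Rightarrow> nat \<Rightarrow> real"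
  assumes c0: "\<forall>i\<in>{1..n}. 0 \<le> c i" and d0: "\<forall>i\<in>{1..n}. 0 \<le> d i" and C0: "0 \<le> C"
    and tel: "\<forall>i\<in>{1..n-1}. d (i+1) - d i \<le> c (i+1)"
    and N1: "1 \<le> N" and p1: "1 \<le> p" and uh: "\<forall>j\<in>{1..N}. uhat j \<in> box_set n uL uU" and e0: "0 < \<epsilon>"
    and sound: "\<forall>x\<in>X. sched x \<in> schedules n T \<and> 0 \<le> mult x \<and> (\<forall>j\<in>{1..N}. \<forall>u\<in>box_set n uL uU.
       fval n c d C (sched x) u - mult x * transport_cost p n uhat j u \<le> epi x j)"
    and exact: "\<forall>s\<in>schedules n T. \<forall>\<rho>\<ge>0. \<exists>x\<in>X. sched x = s \<and> mult x = \<rho> \<and>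
       (\<forall>j\<in>{1..N}. \<exists>u\<in>box_set n uL uU. epi x j \<le> fval n c d C s u - \<rho> * transport_cost p n uhat j u)"
    and s: "s \<in> schedules n T"
  defines "obj \<equiv> \<lambda>x. \<epsilon> ^ p * mult x + sample_mean N (epi x)"
  shows "\<forall>x\<in>X. sched x = s \<longrightarrow> worst_exp n c d C p uL uU N uhat \<epsilon> s \<le> ereal (obj x)"
    and "\<exists>x\<in>X. sched x = s \<and> worst_exp n c d C p uL uU N uhat \<epsilon> s = ereal (obj x)"
proof -
  have sound_at: "fval n c d C s u - mult x * transport_cost p n uhat j u \<le> epi x j"
    if "x \<in> X" "sched x = s" "j \<in> {1..N}" "u \<in> box_set n uL uU" for x j u
    using sound that by auto
  have "\<exists>u\<in>box_set n uL uU. \<forall>v\<in>box_set n uL uU.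
      fval n c d C s v - \<rho> * transport_cost p n uhat j v \<le> fval n c d C s u - \<rho> * transport_cost p n uhat j u"
    if \<rho>: "0 \<le> \<rho>" and j: "j \<in> {1..N}" for \<rho> j
  proof -
    obtain x where x: "x \<in> X" "sched x = s" "mult x = \<rho>"
      and attained: "\<forall>j\<in>{1..N}. \<exists>u\<in>box_set n uL uU. epi x j \<le> fval n c d C s u - \<rho> * transport_cost p n uhat j u"
      using exact[rule_format, OF s \<rho>] by blast
    obtain u where "u \<in> box_set n uL uU" "epi x j \<le> fval n c d C s u - \<rho> * transport_cost p n uhat j u"
      using attained j by blast
    then show ?thesis using sound_at[OF x(1,2) j] x(3) by (blast intro: order.trans)
  qed
  then interpret wasserstein_dual "fval n c d C s" p n N uL uU uhat \<epsilon> "\<Sum>i=1..n. (uU i - uL i) ^ p"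
    by (intro wasserstein_dual_fval[OF c0 d0 C0 tel N1 p1 uh e0])
  obtain \<rho>\<^sub>0 where \<rho>\<^sub>0: "0 \<le> \<rho>\<^sub>0" and min: "\<forall>\<rho>\<ge>0. dual_obj \<rho>\<^sub>0 \<le> dual_obj \<rho>"
    and W: "worst_exp n c d C p uL uU N uhat \<epsilon> s = ereal (dual_obj \<rho>\<^sub>0)"
    using worst_case_eq_dual_min unfolding worst_exp_def by blast
  show "\<forall>x\<in>X. sched x = s \<longrightarrow> worst_exp n c d C p uL uU N uhat \<epsilon> s \<le> ereal (obj x)"
  proof (intro ballI impI)
    fix x assume x: "x \<in> X" "sched x = s"
    have mult_nonneg: "0 \<le> mult x" using sound x(1) by blast
    then have "dual_obj \<rho>\<^sub>0 \<le> dual_obj (mult x)" using min by blast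
    also have "\<dots> \<le> obj x"
      unfolding obj_def using mult_nonneg sound_at[OF x] by (rule dual_obj_le_of_bound)
    finally show "worst_exp n c d C p uL uU N uhat \<epsilon> s \<le> ereal (obj x)" unfolding W by simp
  qed
  obtain x where x: "x \<in> X" "sched x = s" "mult x = \<rho>\<^sub>0"
    and attained: "\<forall>j\<in>{1..N}. \<exists>u\<in>box_set n uL uU. epi x j \<le> fval n c d C s u - \<rho>\<^sub>0 * transport_cost p n uhat j u"
    using exact[rule_format, OF s \<rho>\<^sub>0] by blast
  have "obj x \<le> dual_obj \<rho>\<^sub>0"
    unfolding obj_def x(3) using attained by (intro dual_obj_ge_of_attained[OF \<rho>\<^sub>0]) blast
  moreover have "dual_obj \<rho>\<^sub>0 \<le> obj x"
    unfolding obj_def x(3)[symmetric] using \<rho>\<^sub>0[folded x(3)] sound_at[OF x(1,2)] by (rule dual_obj_le_of_bound)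
  ultimately show "\<exists>x\<in>X. sched x = s \<and> worst_exp n c d C p uL uU N uhat \<epsilon> s = ereal (obj x)"
    using x W by (intro bexI[of _ x]) auto
qed

theorem dras_reformulation:
  fixes X :: "'x set" and sched :: "'x \<Rightarrow> vec" and mult :: "'x \<Rightarrow> real" and epi :: "'x \<Rightarrow> nat \<Rightarrow> real"
  assumes c0: "\<forall>i\<in>{1..n}. 0 \<le> c i" and d0: "\<forall>i\<in>{1..n}. 0 \<le> d i" and C0: "0 \<le> C"
    and tel: "\<forall>i\<in>{1..n-1}. d (i+1) - d i \<le> c (i+1)"
    and N1: "1 \<le> N" and p1: "1 \<le> p" and uh: "\<forall>j\<in>{1..N}. uhat j \<in> box_set n uL uU" and e0: "0 < \<epsilon>"
    and sound: "\<forall>x\<in>X. sched x \<in> schedules n T \<and> 0 \<le> mult x \<and> (\<forall>j\<in>{1..N}. \<forall>u\<in>box_set n uL uU.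
       fval n c d C (sched x) u - mult x * transport_cost p n uhat j u \<le> epi x j)"
    and exact: "\<forall>s\<in>schedules n T. \<forall>\<rho>\<ge>0. \<exists>x\<in>X. sched x = s \<and> mult x = \<rho> \<and>
       (\<forall>j\<in>{1..N}. \<exists>u\<in>box_set n uL uU. epi x j \<le> fval n c d C s u - \<rho> * transport_cost p n uhat j u)"
  defines "obj \<equiv> \<lambda>x. \<epsilon> ^ p * mult x + sample_mean N (epi x)"
  shows "dras_val n c d C T p uL uU N uhat \<epsilon> = (INF x\<in>X. ereal (obj x))"
    and "dras_opt n c d C T p uL uU N uhat \<epsilon> =
      {s. \<exists>x\<in>X. sched x = s \<and> ereal (obj x) = (INF x\<in>X. ereal (obj x))}"
proof -
  note certified = worst_exp_certified[OF c0 d0 C0 tel N1 p1 uh e0 sound exact]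
  have worst_le_obj: "sched x \<in> schedules n T \<and> worst_exp n c d C p uL uU N uhat \<epsilon> (sched x) \<le> ereal (obj x)"
    if "x \<in> X" for x
    using sound that certified(1) unfolding obj_def by blast
  have worst_eq_obj: "\<exists>x\<in>X. sched x = s \<and> worst_exp n c d C p uL uU N uhat \<epsilon> s = ereal (obj x)"
    if "s \<in> schedules n T" for s
    using certified(2)[OF that] unfolding obj_def by blast
  show "dras_val n c d C T p uL uU N uhat \<epsilon> = (INF x\<in>X. ereal (obj x))"
    unfolding dras_val_def using worst_le_obj worst_eq_obj by (rule INF_eq_INF_of_witnesses(1))
  show "dras_opt n c d C T p uL uU N uhat \<epsilon> =
      {s. \<exists>x\<in>X. sched x = s \<and> ereal (obj x) = (INF x\<in>X. ereal (obj x))}"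
    unfolding dras_opt_def dras_val_def using worst_le_obj worst_eq_obj by (rule INF_eq_INF_of_witnesses(2))
qed

lemma lp1_reformulation:
  assumes c0: "\<forall>i\<in>{1..n}. 0 \<le> c i" and d0: "\<forall>i\<in>{1..n}. 0 \<le> d i" and C0: "0 \<le> C"
    and tel: "\<forall>i\<in>{1..n-1}. d (i+1) - d i \<le> c (i+1)"
    and N1: "1 \<le> N" and uh: "\<forall>j\<in>{1..N}. uhat j \<in> box_set n uL uU" and e0: "0 < \<epsilon>"
  shows "dras_val n c d C T 1 uL uU N uhat \<epsilon> = lp1_val n c d C T uL uU N uhat \<epsilon>"
    and "dras_opt n c d C T 1 uL uU N uhat \<epsilon> = lp1_opt n c d C T uL uU N uhat \<epsilon>"
proof -
  define X where "X = {(\<rho>, s, \<gamma>, z). lp1_feas n c d C T uL uU N uhat \<rho> s \<gamma> z}"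
  have obj: "lp1_obj n N \<epsilon> \<rho> \<gamma> = \<epsilon> ^ 1 * \<rho> + sample_mean N (\<lambda>j. \<Sum>i=1..n. \<gamma> i j)" for \<rho> \<gamma>
    unfolding lp1_obj_def sample_mean_def by simp
  note reformulation = dras_reformulation[where X = X and sched = "\<lambda>x. fst (snd x)" and mult = fst
      and epi = "\<lambda>x j. \<Sum>i=1..n. fst (snd (snd x)) i j", OF c0 d0 C0 tel N1 order_refl uh e0]
  have sound: "\<forall>x\<in>X. fst (snd x) \<in> schedules n T \<and> 0 \<le> fst x \<and> (\<forall>j\<in>{1..N}. \<forall>u\<in>box_set n uL uU.
      fval n c d C (fst (snd x)) u - fst x * transport_cost 1 n uhat j u \<le> (\<Sum>i=1..n. fst (snd (snd x)) i j))"
    using lp1_feas_sound[OF c0 d0 C0 tel uh] unfolding X_def by auto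
  have exact: "\<forall>s\<in>schedules n T. \<forall>\<rho>\<ge>0. \<exists>x\<in>X. fst (snd x) = s \<and> fst x = \<rho> \<and> (\<forall>j\<in>{1..N}. \<exists>u\<in>box_set n uL uU.
      (\<Sum>i=1..n. fst (snd (snd x)) i j) \<le> fval n c d C s u - \<rho> * transport_cost 1 n uhat j u)"
    using lp1_feas_exact[OF c0 d0 C0 tel uh] unfolding X_def by fastforce
  show val: "dras_val n c d C T 1 uL uU N uhat \<epsilon> = lp1_val n c d C T uL uU N uhat \<epsilon>"
    using reformulation(1)[OF sound exact] unfolding lp1_val_def X_def obj by simp
  show "dras_opt n c d C T 1 uL uU N uhat \<epsilon> = lp1_opt n c d C T uL uU N uhat \<epsilon>"
    using reformulation(2)[OF sound exact] reformulation(1)[OF sound exact]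
    unfolding lp1_opt_def val X_def obj by (auto simp: Bex_def split_paired_Ex)
qed

lemma socp_reformulation:
  assumes c0: "\<forall>i\<in>{1..n}. 0 \<le> c i" and d0: "\<forall>i\<in>{1..n}. 0 \<le> d i" and C0: "0 \<le> C"
    and tel: "\<forall>i\<in>{1..n-1}. d (i+1) - d i \<le> c (i+1)"
    and N1: "1 \<le> N" and uh: "\<forall>j\<in>{1..N}. uhat j \<in> box_set n uL uU" and e0: "0 < \<epsilon>"
  shows "dras_val n c d C T 2 uL uU N uhat \<epsilon> = socp_val n c d C T uL uU N uhat \<epsilon>"
    and "dras_opt n c d C T 2 uL uU N uhat \<epsilon> = socp_opt n c d C T uL uU N uhat \<epsilon>"
proof -
  define X where "X = {(\<rho>, s, \<gamma>, z, \<beta>L, \<beta>U, r). socp_feas n c d C T uL uU N uhat \<rho> s \<gamma> z \<beta>L \<beta>U r}"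
  have obj: "socp_obj n N \<epsilon> \<rho> \<gamma> = \<epsilon> ^ 2 * \<rho> + sample_mean N (\<lambda>j. \<Sum>i=1..n. \<gamma> i j)" for \<rho> \<gamma>
    unfolding socp_obj_def sample_mean_def by simp
  note reformulation = dras_reformulation[where X = X and sched = "\<lambda>x. fst (snd x)" and mult = fst
      and epi = "\<lambda>x j. \<Sum>i=1..n. fst (snd (snd x)) i j", OF c0 d0 C0 tel N1 _ uh e0]
  have sound: "\<forall>x\<in>X. fst (snd x) \<in> schedules n T \<and> 0 \<le> fst x \<and> (\<forall>j\<in>{1..N}. \<forall>u\<in>box_set n uL uU.
      fval n c d C (fst (snd x)) u - fst x * transport_cost 2 n uhat j u \<le> (\<Sum>i=1..n. fst (snd (snd x)) i j))"
    using socp_feas_sound[OF c0 d0 C0 tel] unfolding X_def by auto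
  have exact: "\<forall>s\<in>schedules n T. \<forall>\<rho>\<ge>0. \<exists>x\<in>X. fst (snd x) = s \<and> fst x = \<rho> \<and> (\<forall>j\<in>{1..N}. \<exists>u\<in>box_set n uL uU.
      (\<Sum>i=1..n. fst (snd (snd x)) i j) \<le> fval n c d C s u - \<rho> * transport_cost 2 n uhat j u)"
    using socp_feas_exact[OF c0 d0 C0 tel uh] unfolding X_def by fastforce
  show val: "dras_val n c d C T 2 uL uU N uhat \<epsilon> = socp_val n c d C T uL uU N uhat \<epsilon>"
    using reformulation(1)[OF _ sound exact] unfolding socp_val_def X_def obj by simp
  show "dras_opt n c d C T 2 uL uU N uhat \<epsilon> = socp_opt n c d C T uL uU N uhat \<epsilon>"
    using reformulation(2)[OF _ sound exact] reformulation(1)[OF _ sound exact]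
    unfolding socp_opt_def val X_def obj by (auto simp: Bex_def split_paired_Ex)
qed

theorem theorem4:
  fixes n N :: nat and T C \<epsilon> :: real and c d uL uU :: "nat \<Rightarrow> real"
    and uhat :: "nat \<Rightarrow> nat \<Rightarrow> real"
  assumes "1 \<le> n" and "1 \<le> N" and "0 < T"
    and "\<forall>i\<in>{1..n}. 0 \<le> c i" and "\<forall>i\<in>{1..n}. 0 \<le> d i" and "0 \<le> C"
    and "\<forall>i\<in>{1..n-1}. d (i+1) - d i \<le> c (i+1)"
    and "\<forall>i\<in>{1..n}. 0 \<le> uL i \<and> uL i < uU i"
    and "\<forall>j\<in>{1..N}. uhat j \<in> box_set n uL uU"
    and "0 < \<epsilon>"
  shows "(dras_val n c d C T 1 uL uU N uhat \<epsilon> = lp1_val n c d C T uL uU N uhat \<epsilon> \<and>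
          dras_opt n c d C T 1 uL uU N uhat \<epsilon> = lp1_opt n c d C T uL uU N uhat \<epsilon>) \<and>
         (dras_val n c d C T 2 uL uU N uhat \<epsilon> = socp_val n c d C T uL uU N uhat \<epsilon> \<and>
          dras_opt n c d C T 2 uL uU N uhat \<epsilon> = socp_opt n c d C T uL uU N uhat \<epsilon>)"
  using lp1_reformulation[OF assms(4-7,2,9,10)] socp_reformulation[OF assms(4-7,2,9,10)] by blast

end
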